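(* Let $\mathbf{PsTop}$ be the category of pseudotopological spaces, with cylinder $IX = X \times [0,1]$, $i_k(x) = (x,k)$ ($k=0,1$), $p : X\times[0,1]\to X$ the projection, initial object $\varnothing$ (the empty space), and $\mathrm{cof}$ the class of morphisms $i : B \to A$ having the homotopy extension property (defined below). Then $(\mathbf{PsTop}, I, \mathrm{cof}, \varnothing)$ is an $I$-category.
   Context: Pseudotopological spaces: a convergence space is a set $X$ with a relation between filters on $X$ and points (written $\lambda \to x$) such that $\lambda \to x$, $\lambda\subseteq\lambda'$ imply $\lambda'\to x$, and the principal ultrafilter $\dot x \to x$; it is pseudotopological iff $\lambda \to x$ holds exactly when every ultrafilter containing $\lambda$ converges to $x$. Continuous maps: $\lambda\to x$ implies $f(\lambda)\to f(x)$, where $f(\lambda)$ is the filter generated by images. $[0,1]$ has its topological convergence ($\lambda \to x$ iff $\lambda$ contains the neighbourhood filter of $x$); products and pushouts are the initial/final structures in $\mathbf{PsTop}$. Homotopy extension property of $i : B \to A$: for $k = 0$ and $k=1$, for every object $Y$ and morphisms $f : A \to Y$, $G : IB \to Y$ with $f \circ i = G \circ i_k$, there exists $H : IA \to Y$ with $H \circ i_k = f$ and $H \circ Ii = G$. An $I$-category is a tuple $(\mathcal{C}, \mathrm{cof}, (I,i_0,i_1,p), \varnothing)$ with $(I,i_0,i_1,p)$ a cylinder (functor $I$, natural transformations $i_0,i_1 : \mathrm{Id} \to I$, $p : I \to \mathrm{Id}$, $p i_k = \mathrm{id}$), $\varnothing$ an initial object, satisfying: (1) Cylinder axiom: $I\varnothing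 = \varnothing$. (2) Pushout axiom: for a cofibration $i : B \to A$ and any $f : B \to X$ the pushout $A \cup_B X$ exists, the induced map $\bar i : X \to A\cup_B X$ is a cofibration, and $I$ carries this pushout to a pushout, $I(A\cup_B X) = IA \cup_{IB} IX$. (3) Cofibration axiom: isomorphisms are cofibrations; $\varnothing \to X$ is a cofibration for every $X$; composites of cofibrations are cofibrations; every cofibration has the homotopy extension property. (4) Interchange axiom: for every $X$ there is $T : IIX \to IIX$ with $T i_k = I i_k$ and $T I(i_k) = i_k$ for $k=0,1$. (5) Relative cylinder axiom: for a cofibration $i : B \to A$, the map $j = (i_0, Ii, i_1) : A \cup_B IB \cup_B A \to IA$ induced from the pushout of $A \xleftarrow{i} B \xrightarrow{i_0} IB \xleftarrow{i_1} B \xrightarrow{i} A$ is a cofibration. *)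

theory Defs
  imports "HOL-Analysis.Analysis"
begin

text \<open>Filters are Isabelle filters
F with F \<noteq> bot and F \<le> principal X; note that in Isabelle's order "F' \<le> F" means
that F' is finer, i.e. F \<subseteq> F' as families of sets.\<close>

record 'a cspace =
  carrier :: "'a set"
  conv :: "'a filter \<Rightarrow> 'a \<Rightarrow> bool"

definition pfilter :: "'a set \<Rightarrow> 'a filter \<Rightarrow> bool" where
  "pfilter X F \<longleftrightarrow> F \<noteq> bot \<and> F \<le> principal X"

definition ultra :: "'a filter \<Rightarrow> bool" where
  "ultra U \<longleftrightarrow> U \<noteq> bot \<and> (\<forall>G. G \<le> U \<longrightarrow> G \<noteq> bot \<longrightarrow> G = U)"

definition convergence_space :: "'a cspace \<Rightarrow> bool" where
  "convergence_space S \<longleftrightarrow>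
     (\<forall>F x. conv S F x \<longrightarrow> pfilter (carrier S) F \<and> x \<in> carrier S) \<and>
     (\<forall>F F' x. conv S F x \<and> pfilter (carrier S) F' \<and> F' \<le> F \<longrightarrow> conv S F' x) \<and>
     (\<forall>x\<in>carrier S. conv S (principal {x}) x)"

definition pseudotop :: "'a cspace \<Rightarrow> bool" where
  "pseudotop S \<longleftrightarrow> convergence_space S \<and>
     (\<forall>F x. pfilter (carrier S) F \<and> x \<in> carrier S \<and>
        (\<forall>U. ultra U \<and> U \<le> F \<longrightarrow> conv S U x) \<longrightarrow> conv S F x)"

text \<open>Morphisms of PsTop: continuous maps (only their values on the carrier matter).\<close>

definition cmap :: "'a cspace \<Rightarrow> 'b cspace \<Rightarrow> ('a \<Rightarrow> 'b) \<Rightarrow> bool" where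
  "cmap S T f \<longleftrightarrow> f ` carrier S \<subseteq> carrier T \<and>
     (\<forall>F x. conv S F x \<longrightarrow> conv T (filtermap f F) (f x))"

definition ps_iso :: "'a cspace \<Rightarrow> 'b cspace \<Rightarrow> ('a \<Rightarrow> 'b) \<Rightarrow> bool" where
  "ps_iso S T f \<longleftrightarrow> cmap S T f \<and>
     (\<exists>g. cmap T S g \<and> (\<forall>x\<in>carrier S. g (f x) = x) \<and> (\<forall>y\<in>carrier T. f (g y) = y))"

definition empty_space :: "'a cspace" where
  "empty_space = \<lparr>carrier = {}, conv = (\<lambda>F x. False)\<rparr>"

definition unit_interval :: "real cspace" where
  "unit_interval = \<lparr>carrier = {0..1},
     conv = (\<lambda>F t. pfilter {0..1} F \<and> t \<in> {0..1} \<and> F \<le> nhds t)\<rparr>"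

definition cyl :: "'a cspace \<Rightarrow> ('a \<times> real) cspace" where
  "cyl X = \<lparr>carrier = carrier X \<times> {0..1},
     conv = (\<lambda>F z. pfilter (carrier X \<times> {0..1}) F \<and> z \<in> carrier X \<times> {0..1} \<and>
                  conv X (filtermap fst F) (fst z) \<and>
                  conv unit_interval (filtermap snd F) (snd z))\<rparr>"

definition incl :: "real \<Rightarrow> 'a \<Rightarrow> 'a \<times> real" where
  "incl k x = (x, k)"

definition proj :: "'a \<times> real \<Rightarrow> 'a" where
  "proj z = fst z"

definition Imap :: "('a \<Rightarrow> 'b) \<Rightarrow> 'a \<times> real \<Rightarrow> 'b \<times> real" where
  "Imap f z = (f (fst z), snd z)"

definition sum_space :: "'a cspace \<Rightarrow> 'b cspace \<Rightarrow> ('a + 'b) cspace" where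
  "sum_space A X = \<lparr>carrier = Inl ` carrier A \<union> Inr ` carrier X,
     conv = (\<lambda>F z. pfilter (Inl ` carrier A \<union> Inr ` carrier X) F \<and>
       ((\<exists>G a. conv A G a \<and> z = Inl a \<and> F \<le> filtermap Inl G) \<or>
        (\<exists>G x. conv X G x \<and> z = Inr x \<and> F \<le> filtermap Inr G)))\<rparr>"

text \<open>Quotient of a space by an equivalence relation R on its carrier, with the final
structure in PsTop: the pseudotopological modification of the final convergence
w.r.t. the quotient map.\<close>
definition quotient_space :: "'a cspace \<Rightarrow> 'a rel \<Rightarrow> 'a set cspace" where
  "quotient_space S R = \<lparr>carrier = carrier S // R,
     conv = (\<lambda>F c. pfilter (carrier S // R) F \<and> c \<in> carrier S // R \<and>
       (\<forall>U. ultra U \<and> U \<le> F \<longrightarrow>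
          (\<exists>G s. conv S G s \<and> R `` {s} = c \<and> U \<le> filtermap (\<lambda>s. R `` {s}) G)))\<rparr>"

definition glue_rel :: "'a cspace \<Rightarrow> 'a rel \<Rightarrow> 'a rel" where
  "glue_rel S E = (Id_on (carrier S) \<union> E \<union> E\<inverse>)\<^sup>*"

definition glue :: "'a cspace \<Rightarrow> 'a rel \<Rightarrow> 'a set cspace" where
  "glue S E = quotient_space S (glue_rel S E)"

definition gcls :: "'a cspace \<Rightarrow> 'a rel \<Rightarrow> 'a \<Rightarrow> 'a set" where
  "gcls S E s = glue_rel S E `` {s}"

definition po_rel :: "'b cspace \<Rightarrow> ('b \<Rightarrow> 'a) \<Rightarrow> ('b \<Rightarrow> 'x) \<Rightarrow> ('a + 'x) rel" where
  "po_rel B i f = {(Inl (i b), Inr (f b)) | b. b \<in> carrier B}"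

definition pushout_space ::
  "'b cspace \<Rightarrow> 'a cspace \<Rightarrow> 'x cspace \<Rightarrow> ('b \<Rightarrow> 'a) \<Rightarrow> ('b \<Rightarrow> 'x) \<Rightarrow> ('a + 'x) set cspace" where
  "pushout_space B A X i f = glue (sum_space A X) (po_rel B i f)"

definition po_inl ::
  "'b cspace \<Rightarrow> 'a cspace \<Rightarrow> 'x cspace \<Rightarrow> ('b \<Rightarrow> 'a) \<Rightarrow> ('b \<Rightarrow> 'x) \<Rightarrow> 'a \<Rightarrow> ('a + 'x) set" where
  "po_inl B A X i f a = gcls (sum_space A X) (po_rel B i f) (Inl a)"

definition po_inr ::
  "'b cspace \<Rightarrow> 'a cspace \<Rightarrow> 'x cspace \<Rightarrow> ('b \<Rightarrow> 'a) \<Rightarrow> ('b \<Rightarrow> 'x) \<Rightarrow> 'x \<Rightarrow> ('a + 'x) set" where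
  "po_inr B A X i f x = gcls (sum_space A X) (po_rel B i f) (Inr x)"

text \<open>The universal property of a pushout square in PsTop (u \<circ> i = v \<circ> f on B), tested
against all pseudotopological spaces Z whose points have type 'z.\<close>
definition is_pushout :: "'z itself \<Rightarrow> 'b cspace \<Rightarrow> 'a cspace \<Rightarrow> 'x cspace \<Rightarrow> 'p cspace \<Rightarrow>
    ('b \<Rightarrow> 'a) \<Rightarrow> ('b \<Rightarrow> 'x) \<Rightarrow> ('a \<Rightarrow> 'p) \<Rightarrow> ('x \<Rightarrow> 'p) \<Rightarrow> bool" where
  "is_pushout (_ :: 'z itself) B A X P i f u v \<longleftrightarrow>
     pseudotop P \<and> cmap A P u \<and> cmap X P v \<and> (\<forall>b\<in>carrier B. u (i b) = v (f b)) \<and>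
     (\<forall>(Z :: 'z cspace) g h. pseudotop Z \<and> cmap A Z g \<and> cmap X Z h \<and>
        (\<forall>b\<in>carrier B. g (i b) = h (f b)) \<longrightarrow>
        (\<exists>w. cmap P Z w \<and> (\<forall>a\<in>carrier A. w (u a) = g a) \<and> (\<forall>x\<in>carrier X. w (v x) = h x)) \<and>
        (\<forall>w w'. cmap P Z w \<and> (\<forall>a\<in>carrier A. w (u a) = g a) \<and> (\<forall>x\<in>carrier X. w (v x) = h x) \<and>
                cmap P Z w' \<and> (\<forall>a\<in>carrier A. w' (u a) = g a) \<and> (\<forall>x\<in>carrier X. w' (v x) = h x)
                \<longrightarrow> (\<forall>p\<in>carrier P. w p = w' p)))"

text \<open>HEP of i : B \<rightarrow> A, tested against all pseudotopological spaces Y whose points have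
type 'y.\<close>
definition hep :: "'y itself \<Rightarrow> 'b cspace \<Rightarrow> 'a cspace \<Rightarrow> ('b \<Rightarrow> 'a) \<Rightarrow> bool" where
  "hep (_ :: 'y itself) B A i \<longleftrightarrow>
     (\<forall>k\<in>{0, 1::real}. \<forall>(Y :: 'y cspace) f G.
        pseudotop Y \<and> cmap A Y f \<and> cmap (cyl B) Y G \<and>
        (\<forall>b\<in>carrier B. f (i b) = G (incl k b)) \<longrightarrow>
        (\<exists>H. cmap (cyl A) Y H \<and> (\<forall>a\<in>carrier A. H (incl k a) = f a) \<and>
             (\<forall>z\<in>carrier (cyl B). H (Imap i z) = G z)))"

text \<open>The test spaces Y range over spaces whose
points have type 'a + 'b \<times> real; every mapping cylinder A \<union>_{B} IB (the universal test
object for the HEP) is isomorphic to such a space, so this is the HEP against all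
objects.  The theorem below moreover asserts explicitly that every cofibration has
the HEP against spaces of arbitrary type.\<close>
definition cof :: "'b cspace \<Rightarrow> 'a cspace \<Rightarrow> ('b \<Rightarrow> 'a) \<Rightarrow> bool" where
  "cof B A i \<longleftrightarrow> pseudotop B \<and> pseudotop A \<and> cmap B A i \<and>
                 hep TYPE('a + 'b \<times> real) B A i"

definition dcyl_rel :: "'b cspace \<Rightarrow> ('b \<Rightarrow> 'a) \<Rightarrow> ('a + ('b \<times> real) + 'a) rel" where
  "dcyl_rel B i = {(Inl (i b), Inr (Inl (b, 0))) | b. b \<in> carrier B} \<union>
                  {(Inr (Inr (i b)), Inr (Inl (b, 1))) | b. b \<in> carrier B}"

definition dcyl :: "'b cspace \<Rightarrow> 'a cspace \<Rightarrow> ('b \<Rightarrow> 'a) \<Rightarrow> ('a + ('b \<times> real) + 'a) set cspace" where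
  "dcyl B A i = glue (sum_space A (sum_space (cyl B) A)) (dcyl_rel B i)"

definition dcyl_raw :: "('b \<Rightarrow> 'a) \<Rightarrow> 'a + ('b \<times> real) + 'a \<Rightarrow> 'a \<times> real" where
  "dcyl_raw i s = (case s of Inl a \<Rightarrow> incl 0 a
                           | Inr (Inl z) \<Rightarrow> Imap i z
                           | Inr (Inr a) \<Rightarrow> incl 1 a)"

text \<open>j = (i_0, Ii, i_1) on the colimit, evaluated via a representative of the class.\<close>
definition dcyl_map :: "('b \<Rightarrow> 'a) \<Rightarrow> ('a + ('b \<times> real) + 'a) set \<Rightarrow> 'a \<times> real" where
  "dcyl_map i c = dcyl_raw i (SOME s. s \<in> c)"

end

theory Submission
  imports Defs
begin

text \<open>Final structures in PsTop are described by ultrafilters, and the cylinder functor preserves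
them (PsTop is cartesian closed); hence pushouts and their cylinders are obtained by gluing.
A map \<open>i : B \<rightarrow> A\<close> with the HEP against its own mapping cylinder \<open>A \<union>\<^sub>B IB\<close> admits a
retraction \<open>IA \<rightarrow> A \<union>\<^sub>B IB\<close>, and composing with it solves every extension problem, for \<open>i\<close>
as well as for \<open>Ii\<close>.  For the relative cylinder axiom, a piecewise linear homeomorphism of the
square folds its sides \<open>s = 0\<close>, \<open>t = 0\<close>, \<open>s = 1\<close> onto the bottom side, which turns the
extension problem for \<open>j\<close> into one for \<open>Ii\<close>.\<close>

section \<open>Ultrafilters\<close>

lemma filtermap_cong_eventually:
  "eventually (\<lambda>x. f x = g x) F \<Longrightarrow> filtermap f F = filtermap g F"
  unfolding filter_eq_iff eventually_filtermap by (auto elim: eventually_elim2)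

lemma ultra_not_bot: "ultra U \<Longrightarrow> U \<noteq> bot"
  unfolding ultra_def by blast

lemma inf_principal_not_bot:
  "\<not> eventually (\<lambda>x. \<not> P x) F \<Longrightarrow> inf F (principal {x. P x}) \<noteq> bot"
  unfolding trivial_limit_def eventually_inf_principal by simp

lemma ultra_iff:
  "ultra U \<longleftrightarrow> U \<noteq> bot \<and> (\<forall>P. eventually P U \<or> eventually (\<lambda>x. \<not> P x) U)"
proof
  assume U: "ultra U"
  show "U \<noteq> bot \<and> (\<forall>P. eventually P U \<or> eventually (\<lambda>x. \<not> P x) U)"
  proof (intro conjI allI disjCI)
    show "U \<noteq> bot" by (rule ultra_not_bot[OF U])
    fix P assume "\<not> eventually (\<lambda>x. \<not> P x) U"
    then have "inf U (principal {x. P x}) \<noteq> bot" by (rule inf_principal_not_bot)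
    then have "inf U (principal {x. P x}) = U"
      using U inf_le1 unfolding ultra_def by blast
    moreover have "eventually P (inf U (principal {x. P x}))"
      by (simp add: eventually_inf_principal)
    ultimately show "eventually P U" by simp
  qed
next
  assume U: "U \<noteq> bot \<and> (\<forall>P. eventually P U \<or> eventually (\<lambda>x. \<not> P x) U)"
  show "ultra U"
    unfolding ultra_def
  proof (intro conjI allI impI antisym)
    fix G assume G: "G \<le> U" "G \<noteq> bot"
    show "U \<le> G"
      unfolding le_filter_def
    proof (intro allI impI)
      fix P assume PG: "eventually P G"
      show "eventually P U"
      proof (rule ccontr)
        assume "\<not> eventually P U"
        then have "eventually (\<lambda>x. \<not> P x) G" using U G(1) filter_leD by blast
        with PG have "eventually (\<lambda>x. False) G" by (auto elim: eventually_elim2)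
        with G(2) show False by simp
      qed
    qed
  qed (use U in simp)
qed

lemma ultra_filtermap: "ultra U \<Longrightarrow> ultra (filtermap f U)"
  unfolding ultra_iff eventually_filtermap filtermap_bot_iff by blast

lemma ultra_exists_le:
  assumes "F \<noteq> bot"
  shows "\<exists>U. ultra U \<and> U \<le> F"
proof -
  let ?A = "{G. G \<le> F \<and> G \<noteq> bot}"
  have "\<exists>M\<in>?A. \<forall>G\<in>?A. G \<le> M \<longrightarrow> G = M"
  proof (rule predicate_Zorn)
    show "partial_order_on ?A (relation_of (\<lambda>G H. H \<le> G) ?A)"
      by (rule partial_order_on_relation_ofI) auto
    fix C assume "C \<in> Chains (relation_of (\<lambda>G H. H \<le> G) ?A)"
    then have C: "C \<subseteq> ?A" and total: "\<And>G H. G \<in> C \<Longrightarrow> H \<in> C \<Longrightarrow> G \<le> H \<or> H \<le> G"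
      unfolding Chains_def relation_of_def by auto
    show "\<exists>M\<in>?A. \<forall>G\<in>C. M \<le> G"
    proof (cases "C = {}")
      case True
      then show ?thesis using assms by blast
    next
      case False
      have "eventually P (Inf C) \<longleftrightarrow> (\<exists>G\<in>C. eventually P G)" for P
        by (rule eventually_Inf_base[OF False]) (metis inf.absorb1 inf.absorb2 total)
      then have "Inf C \<noteq> bot"
        using C by (auto simp: trivial_limit_def)
      moreover have "Inf C \<le> F"
        using False C by (auto intro: Inf_lower2)
      ultimately show ?thesis by (auto intro: Inf_lower)
    qed
  qed
  then obtain M where M: "M \<le> F" "M \<noteq> bot" "\<And>G. G \<le> F \<Longrightarrow> G \<noteq> bot \<Longrightarrow> G \<le> M \<Longrightarrow> G = M"
    by blast
  then have "ultra M"
    unfolding ultra_def by (blast intro: order_trans)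
  then show ?thesis using M(1) by blast
qed

lemma filter_le_by_ultra:
  assumes "\<And>U. ultra U \<Longrightarrow> U \<le> F \<Longrightarrow> U \<le> G"
  shows "F \<le> G"
  unfolding le_filter_def
proof (intro allI impI)
  fix P assume PG: "eventually P G"
  show "eventually P F"
  proof (rule ccontr)
    assume nP: "\<not> eventually P F"
    let ?H = "inf F (principal {x. \<not> P x})"
    have "?H \<noteq> bot"
      using nP inf_principal_not_bot[of "\<lambda>x. \<not> P x"] by simp
    then obtain U where U: "ultra U" "U \<le> ?H"
      using ultra_exists_le by blast
    then have "eventually P U"
      using assms PG by (meson filter_leD le_inf_iff)
    moreover have "eventually (\<lambda>x. \<not> P x) U"
      using U(2) unfolding le_filter_def eventually_inf_principal by auto
    ultimately have "eventually (\<lambda>x. False) U"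
      by (auto elim: eventually_elim2)
    then show False using ultra_not_bot[OF U(1)] by simp
  qed
qed

lemma ultra_filtermap_lift:
  assumes V: "ultra V" "V \<le> filtermap f F"
  shows "\<exists>W. ultra W \<and> W \<le> F \<and> filtermap f W = V"
proof -
  let ?H = "inf F (filtercomap f V)"
  have "?H \<noteq> bot"
  proof
    assume "?H = bot"
    then have "eventually (\<lambda>x. False) ?H" by simp
    then obtain P Q where P: "eventually P F" and Q: "eventually Q (filtercomap f V)"
      and PQ: "\<forall>x. P x \<longrightarrow> Q x \<longrightarrow> False"
      unfolding eventually_inf by blast
    from Q obtain Q' where Q': "eventually Q' V" "\<forall>x. Q' (f x) \<longrightarrow> Q x"
      unfolding eventually_filtercomap by blast
    have "eventually (\<lambda>y. \<exists>x. P x \<and> y = f x) (filtermap f F)"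
      unfolding eventually_filtermap using P by (auto elim: eventually_mono)
    then have "eventually (\<lambda>y. \<exists>x. P x \<and> y = f x) V" using V(2) unfolding le_filter_def by blast
    with Q'(1) have "eventually (\<lambda>y. False) V"
      by eventually_elim (use PQ Q'(2) in blast)
    then show False using V(1) unfolding ultra_def by simp
  qed
  then obtain W where W: "ultra W" "W \<le> ?H" using ultra_exists_le by blast
  have "filtermap f W \<le> V"
    using W(2) by (meson filtermap_filtercomap filtermap_mono inf.boundedE order_trans)
  moreover have "filtermap f W \<noteq> bot" using W(1) unfolding ultra_def filtermap_bot_iff by simp
  ultimately have "filtermap f W = V" using V(1) unfolding ultra_def by blast
  moreover have "W \<le> F" using W(2) by (meson inf.boundedE)
  ultimately show ?thesis using W(1) by blast
qed

lemma pfilter_not_bot: "pfilter X F \<Longrightarrow> F \<noteq> bot"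
  unfolding pfilter_def by simp

lemma pfilter_eventually_mem: "pfilter X F \<Longrightarrow> eventually (\<lambda>x. x \<in> X) F"
  unfolding pfilter_def le_principal by simp

lemma pfilter_mono: "pfilter X F \<Longrightarrow> F' \<le> F \<Longrightarrow> F' \<noteq> bot \<Longrightarrow> pfilter X F'"
  unfolding pfilter_def by (meson order_trans)

lemma pfilter_filtermap: "pfilter X F \<Longrightarrow> f ` X \<subseteq> Y \<Longrightarrow> pfilter Y (filtermap f F)"
  unfolding pfilter_def filtermap_bot_iff le_principal eventually_filtermap
  by (auto elim!: eventually_mono)

lemma convergence_spaceI:
  assumes "\<And>F x. conv S F x \<Longrightarrow> pfilter (carrier S) F \<and> x \<in> carrier S"
    and "\<And>F F' x. conv S F x \<Longrightarrow> pfilter (carrier S) F' \<Longrightarrow> F' \<le> F \<Longrightarrow> conv S F' x"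
    and "\<And>x. x \<in> carrier S \<Longrightarrow> conv S (principal {x}) x"
  shows "convergence_space S"
  unfolding convergence_space_def using assms by blast

context
  fixes S :: "'a cspace"
  assumes S: "convergence_space S"
begin

lemma conv_pfilter: "conv S F x \<Longrightarrow> pfilter (carrier S) F"
  using S unfolding convergence_space_def by blast

lemma conv_in_carrier: "conv S F x \<Longrightarrow> x \<in> carrier S"
  using S unfolding convergence_space_def by blast

lemma conv_eventually_mem: "conv S F x \<Longrightarrow> eventually (\<lambda>y. y \<in> carrier S) F"
  by (rule pfilter_eventually_mem[OF conv_pfilter])

lemma conv_mono: "conv S F x \<Longrightarrow> F' \<le> F \<Longrightarrow> F' \<noteq> bot \<Longrightarrow> conv S F' x"
  using S unfolding convergence_space_def by (meson pfilter_mono)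

lemma conv_principal: "x \<in> carrier S \<Longrightarrow> conv S (principal {x}) x"
  using S unfolding convergence_space_def by blast

end

lemma pseudotop_convergence_space: "pseudotop S \<Longrightarrow> convergence_space S"
  unfolding pseudotop_def by blast

lemma pseudotop_convI:
  "pseudotop S \<Longrightarrow> pfilter (carrier S) F \<Longrightarrow> x \<in> carrier S \<Longrightarrow>
    (\<And>U. ultra U \<Longrightarrow> U \<le> F \<Longrightarrow> conv S U x) \<Longrightarrow> conv S F x"
  unfolding pseudotop_def by blast

lemma cmap_carrier: "cmap S T f \<Longrightarrow> x \<in> carrier S \<Longrightarrow> f x \<in> carrier T"
  unfolding cmap_def by blast

lemma cmap_conv: "cmap S T f \<Longrightarrow> conv S F x \<Longrightarrow> conv T (filtermap f F) (f x)"
  unfolding cmap_def by blast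

lemma cmap_comp:
  assumes f: "cmap S T f" and g: "cmap T U g"
  shows "cmap S U (\<lambda>x. g (f x))"
  unfolding cmap_def
proof (intro conjI allI impI)
  show "(\<lambda>x. g (f x)) ` carrier S \<subseteq> carrier U"
    using cmap_carrier[OF f] cmap_carrier[OF g] by blast
  fix F x assume "conv S F x"
  then have "conv U (filtermap g (filtermap f F)) (g (f x))"
    by (meson cmap_conv f g)
  then show "conv U (filtermap (\<lambda>x. g (f x)) F) (g (f x))"
    by (simp add: filtermap_filtermap)
qed

lemma cmap_cong:
  assumes f: "cmap S T f" and S: "convergence_space S" and fg: "\<And>x. x \<in> carrier S \<Longrightarrow> f x = g x"
  shows "cmap S T g"
  unfolding cmap_def
proof (intro conjI allI impI)
  show "g ` carrier S \<subseteq> carrier T" using f fg cmap_carrier by fastforce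
  fix F x assume c: "conv S F x"
  have "filtermap g F = filtermap f F"
    using conv_eventually_mem[OF S c] by (intro filtermap_cong_eventually) (auto elim: eventually_mono simp: fg)
  then show "conv T (filtermap g F) (g x)"
    using cmap_conv[OF f c] fg[OF conv_in_carrier[OF S c]] by simp
qed

lemma cmap_ultraI:
  assumes S: "convergence_space S" and T: "pseudotop T" and f: "f ` carrier S \<subseteq> carrier T"
    and ultra: "\<And>W x. ultra W \<Longrightarrow> conv S W x \<Longrightarrow> conv T (filtermap f W) (f x)"
  shows "cmap S T f"
  unfolding cmap_def
proof (intro conjI allI impI f)
  fix F x assume c: "conv S F x"
  show "conv T (filtermap f F) (f x)"
  proof (rule pseudotop_convI[OF T])
    show "pfilter (carrier T) (filtermap f F)" using conv_pfilter[OF S c] f by (rule pfilter_filtermap)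
    show "f x \<in> carrier T" using f conv_in_carrier[OF S c] by blast
    fix V assume "ultra V" "V \<le> filtermap f F"
    then obtain W where W: "ultra W" "W \<le> F" "filtermap f W = V"
      using ultra_filtermap_lift by blast
    then show "conv T V (f x)"
      using ultra[OF W(1) conv_mono[OF S c W(2) ultra_not_bot[OF W(1)]]] by simp
  qed
qed

section \<open>Final structures\<close>

text \<open>The final structure in PsTop along \<open>q\<close>: the pseudotopological modification of the image
convergence.\<close>
definition final_space :: "'a cspace \<Rightarrow> ('a \<Rightarrow> 'c) \<Rightarrow> 'c cspace" where
  "final_space S q = \<lparr>carrier = q ` carrier S,
     conv = (\<lambda>F c. pfilter (q ` carrier S) F \<and> c \<in> q ` carrier S \<and>
       (\<forall>U. ultra U \<and> U \<le> F \<longrightarrow> (\<exists>G s. conv S G s \<and> q s = c \<and> U \<le> filtermap q G)))\<rparr>"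

lemma carrier_final_space [simp]: "carrier (final_space S q) = q ` carrier S"
  unfolding final_space_def by simp

lemma pseudotop_final_space:
  assumes S: "convergence_space S"
  shows "pseudotop (final_space S q)"
proof -
  have "conv (final_space S q) (principal {q s}) (q s)" if s: "s \<in> carrier S" for s
    using s conv_principal[OF S s] unfolding final_space_def pfilter_def
    by (fastforce simp: principal_eq_bot_iff)
  then show ?thesis
    unfolding pseudotop_def convergence_space_def by (auto simp: final_space_def intro: order_trans)
qed

lemma cmap_final_space:
  assumes S: "convergence_space S"
  shows "cmap S (final_space S q) q"
  unfolding cmap_def final_space_def
  using conv_pfilter[OF S] conv_in_carrier[OF S] by (auto intro!: pfilter_filtermap)

lemma final_space_univ:
  assumes S: "convergence_space S" and Z: "pseudotop Z" and g: "cmap S Z g"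
    and fibres: "\<And>s s'. s \<in> carrier S \<Longrightarrow> s' \<in> carrier S \<Longrightarrow> q s = q s' \<Longrightarrow> g s = g s'"
  shows "\<exists>w. cmap (final_space S q) Z w \<and> (\<forall>s\<in>carrier S. w (q s) = g s)"
proof -
  define w where "w c = g (SOME s. s \<in> carrier S \<and> q s = c)" for c
  have wq: "w (q s) = g s" if "s \<in> carrier S" for s
    unfolding w_def using that by (metis (mono_tags, lifting) fibres someI)
  have "cmap (final_space S q) Z w"
  proof (rule cmap_ultraI[OF pseudotop_convergence_space[OF pseudotop_final_space[OF S]] Z])
    show "w ` carrier (final_space S q) \<subseteq> carrier Z"
      using wq cmap_carrier[OF g] by auto
    fix W c assume W: "ultra W" and c: "conv (final_space S q) W c"
    then obtain G s where G: "conv S G s" "q s = c" "W \<le> filtermap q G"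
      unfolding final_space_def by auto
    have "filtermap w W \<le> filtermap (\<lambda>y. w (q y)) G"
      using filtermap_mono[OF G(3)] by (simp add: filtermap_filtermap)
    also have "\<dots> = filtermap g G"
      using conv_eventually_mem[OF S G(1)]
      by (intro filtermap_cong_eventually) (auto elim: eventually_mono simp: wq)
    finally show "conv Z (filtermap w W) (w c)"
      using conv_mono[OF pseudotop_convergence_space[OF Z] cmap_conv[OF g G(1)]] W
        wq[OF conv_in_carrier[OF S G(1)]] G(2)
      by (simp add: filtermap_bot_iff ultra_not_bot)
  qed
  then show ?thesis using wq by blast
qed

lemma carrier_unit_interval [simp]: "carrier unit_interval = {0..1}"
  unfolding unit_interval_def by simp

lemma conv_unit_interval:
  "conv unit_interval F t \<longleftrightarrow> pfilter {0..1} F \<and> t \<in> {0..1} \<and> F \<le> nhds t"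
  unfolding unit_interval_def by simp

lemma carrier_cyl [simp]: "carrier (cyl X) = carrier X \<times> {0..1}"
  unfolding cyl_def by simp

lemma conv_cyl:
  "conv (cyl X) F z \<longleftrightarrow> pfilter (carrier X \<times> {0..1}) F \<and> z \<in> carrier X \<times> {0..1} \<and>
    conv X (filtermap fst F) (fst z) \<and> conv unit_interval (filtermap snd F) (snd z)"
  unfolding cyl_def by simp

lemma principal_le_nhds: "principal {x} \<le> nhds (x :: 'a :: topological_space)"
  unfolding le_filter_def eventually_principal by (auto dest: eventually_nhds_x_imp_x)

lemma pseudotop_unit_interval: "pseudotop unit_interval"
  unfolding pseudotop_def
proof (intro conjI allI impI)
  show "convergence_space unit_interval"
  proof (rule convergence_spaceI)
    show "conv unit_interval F' t" if "conv unit_interval F t" "pfilter (carrier unit_interval) F'" "F' \<le> F"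
      for F F' t
      using that order_trans[OF that(3)] unfolding conv_unit_interval carrier_unit_interval by blast
    show "conv unit_interval (principal {t}) t" if "t \<in> carrier unit_interval" for t
      using that principal_le_nhds unfolding conv_unit_interval pfilter_def
      by (simp add: principal_eq_bot_iff)
  qed (unfold conv_unit_interval carrier_unit_interval, blast)
  fix F t assume F: "pfilter (carrier unit_interval) F \<and> t \<in> carrier unit_interval \<and>
    (\<forall>U. ultra U \<and> U \<le> F \<longrightarrow> conv unit_interval U t)"
  have "F \<le> nhds t"
  proof (rule filter_le_by_ultra)
    fix U assume "ultra U" "U \<le> F"
    then show "U \<le> nhds t" using F unfolding conv_unit_interval by blast
  qed
  with F show "conv unit_interval F t" by (simp add: conv_unit_interval)
qed

lemmas convergence_space_unit_interval =
  pseudotop_convergence_space[OF pseudotop_unit_interval]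

lemma convergence_space_cyl:
  assumes X: "convergence_space X"
  shows "convergence_space (cyl X)"
proof (rule convergence_spaceI)
  fix F F' z assume F: "conv (cyl X) F z" and F': "pfilter (carrier (cyl X)) F'" "F' \<le> F"
  have nb: "F' \<noteq> bot" using pfilter_not_bot[OF F'(1)] .
  have "conv X (filtermap fst F') (fst z)"
    using F F' conv_mono[OF X, of "filtermap fst F" "fst z" "filtermap fst F'"]
    unfolding conv_cyl by (simp add: filtermap_mono filtermap_bot_iff nb)
  moreover have "conv unit_interval (filtermap snd F') (snd z)"
    using F F' conv_mono[OF convergence_space_unit_interval, of "filtermap snd F" "snd z" "filtermap snd F'"]
    unfolding conv_cyl by (simp add: filtermap_mono filtermap_bot_iff nb)
  ultimately show "conv (cyl X) F' z" using F F' unfolding conv_cyl by simp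
next
  fix z assume "z \<in> carrier (cyl X)"
  then show "conv (cyl X) (principal {z}) z"
    unfolding conv_cyl using conv_principal[OF X, of "fst z"]
      conv_principal[OF convergence_space_unit_interval, of "snd z"]
    by (auto simp: pfilter_def principal_eq_bot_iff)
qed (auto simp: conv_cyl)

lemma pseudotop_cyl:
  assumes X: "pseudotop X"
  shows "pseudotop (cyl X)"
  unfolding pseudotop_def
proof (intro conjI allI impI)
  show "convergence_space (cyl X)"
    by (rule convergence_space_cyl[OF pseudotop_convergence_space[OF X]])
  fix F z assume F: "pfilter (carrier (cyl X)) F \<and> z \<in> carrier (cyl X) \<and>
    (\<forall>U. ultra U \<and> U \<le> F \<longrightarrow> conv (cyl X) U z)"
  have "conv X (filtermap fst F) (fst z)"
  proof (rule pseudotop_convI[OF X])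
    fix V assume "ultra V" "V \<le> filtermap fst F"
    then obtain W where "ultra W" "W \<le> F" "filtermap fst W = V"
      using ultra_filtermap_lift by blast
    then show "conv X V (fst z)" using F unfolding conv_cyl by blast
  qed (use F in \<open>auto intro: pfilter_filtermap\<close>)
  moreover have "conv unit_interval (filtermap snd F) (snd z)"
  proof (rule pseudotop_convI[OF pseudotop_unit_interval])
    fix V assume "ultra V" "V \<le> filtermap snd F"
    then obtain W where "ultra W" "W \<le> F" "filtermap snd W = V"
      using ultra_filtermap_lift by blast
    then show "conv unit_interval V (snd z)" using F unfolding conv_cyl by blast
  qed (use F in \<open>auto intro: pfilter_filtermap\<close>)
  ultimately show "conv (cyl X) F z" using F unfolding conv_cyl by simp
qed

lemma cmap_Imap:
  assumes f: "cmap X Y f"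
  shows "cmap (cyl X) (cyl Y) (Imap f)"
  unfolding cmap_def
proof (intro conjI allI impI)
  show "Imap f ` carrier (cyl X) \<subseteq> carrier (cyl Y)"
    using cmap_carrier[OF f] by (auto simp: Imap_def)
  fix F z assume c: "conv (cyl X) F z"
  have fst: "filtermap fst (filtermap (Imap f) F) = filtermap f (filtermap fst F)"
    and snd: "filtermap snd (filtermap (Imap f) F) = filtermap snd F"
    by (simp_all add: filtermap_filtermap Imap_def)
  have "pfilter (carrier Y \<times> {0..1}) (filtermap (Imap f) F)"
    using c cmap_carrier[OF f] unfolding conv_cyl by (auto intro!: pfilter_filtermap simp: Imap_def)
  then show "conv (cyl Y) (filtermap (Imap f) F) (Imap f z)"
    using c cmap_carrier[OF f] cmap_conv[OF f] unfolding conv_cyl fst snd by (auto simp: Imap_def)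
qed

lemma cmap_proj: "cmap (cyl X) X proj"
  unfolding cmap_def conv_cyl proj_def by auto

lemma cmap_incl:
  assumes X: "convergence_space X" and k: "k \<in> {0..1}"
  shows "cmap X (cyl X) (incl k)"
  unfolding cmap_def
proof (intro conjI allI impI)
  show "incl k ` carrier X \<subseteq> carrier (cyl X)" using k by (auto simp: incl_def)
  fix F x assume c: "conv X F x"
  have pf: "pfilter (carrier X) F" using conv_pfilter[OF X c] .
  have fst: "filtermap fst (filtermap (incl k) F) = F"
    by (simp add: filtermap_filtermap incl_def filtermap_ident)
  have "filtermap snd (filtermap (incl k) F) \<le> nhds k"
    unfolding le_filter_def eventually_filtermap incl_def by (auto dest: eventually_nhds_x_imp_x)
  moreover have "pfilter {0..1} (filtermap snd (filtermap (incl k) F))"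
    using pf k by (auto intro!: pfilter_filtermap simp: incl_def filtermap_filtermap)
  moreover have "pfilter (carrier X \<times> {0..1}) (filtermap (incl k) F)"
    using pf k by (auto intro!: pfilter_filtermap simp: incl_def)
  ultimately show "conv (cyl X) (filtermap (incl k) F) (incl k x)"
    unfolding conv_cyl conv_unit_interval fst using c conv_in_carrier[OF X c] k by (simp add: incl_def)
qed

lemma conv_cyl_prod_filter:
  assumes X: "convergence_space X" and G: "conv X G s" and H: "conv unit_interval H t"
  shows "conv (cyl X) (G \<times>\<^sub>F H) (s, t)"
proof -
  have pG: "pfilter (carrier X) G" using conv_pfilter[OF X G] .
  have pH: "pfilter {0..1} H" and t: "t \<in> {0..1}" using H unfolding conv_unit_interval by auto
  have nb: "G \<times>\<^sub>F H \<noteq> bot"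
    unfolding prod_filter_eq_bot using pfilter_not_bot[OF pG] pfilter_not_bot[OF pH] by simp
  have "G \<times>\<^sub>F H \<le> principal (carrier X) \<times>\<^sub>F principal {0..1}"
    using pG pH unfolding pfilter_def by (intro prod_filter_mono) auto
  then have "pfilter (carrier X \<times> {0..1}) (G \<times>\<^sub>F H)"
    using nb unfolding pfilter_def principal_prod_principal by simp
  moreover have "conv X (filtermap fst (G \<times>\<^sub>F H)) s"
    using conv_mono[OF X G filtermap_fst_prod_filter] nb by (simp add: filtermap_bot_iff)
  moreover have "conv unit_interval (filtermap snd (G \<times>\<^sub>F H)) t"
    using conv_mono[OF convergence_space_unit_interval H filtermap_snd_prod_filter] nb
    by (simp add: filtermap_bot_iff)
  ultimately show ?thesis using conv_in_carrier[OF X G] t unfolding conv_cyl by simp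
qed

definition reparam :: "(real \<Rightarrow> real) \<Rightarrow> 'a \<times> real \<Rightarrow> 'a \<times> real" where
  "reparam l z = (fst z, l (snd z))"

definition reparam2 :: "(real \<times> real \<Rightarrow> real \<times> real) \<Rightarrow> ('a \<times> real) \<times> real \<Rightarrow> ('a \<times> real) \<times> real" where
  "reparam2 \<rho> z = ((fst (fst z), fst (\<rho> (snd (fst z), snd z))), snd (\<rho> (snd (fst z), snd z)))"

lemma reparam_simp [simp]: "reparam l (x, u) = (x, l u)"
  unfolding reparam_def by simp

lemma reparam2_simp [simp]: "reparam2 \<rho> ((x, u), v) = ((x, fst (\<rho> (u, v))), snd (\<rho> (u, v)))"
  unfolding reparam2_def by simp

lemma continuous_on_filtermap_le_nhds:
  assumes "continuous_on S l" "pfilter S F" "F \<le> nhds t" "t \<in> S"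
  shows "filtermap l F \<le> nhds (l t)"
proof -
  have "((\<lambda>x. x) \<longlongrightarrow> t) F" using assms(3) by (simp add: filterlim_def filtermap_ident)
  from continuous_on_tendsto_compose[OF assms(1) this assms(4) pfilter_eventually_mem[OF assms(2)]]
  show ?thesis by (simp add: filterlim_def)
qed

lemma cmap_reparam:
  assumes X: "convergence_space X" and l: "continuous_on {0..1} l" "l ` {0..1} \<subseteq> {0..1}"
  shows "cmap (cyl X) (cyl X) (reparam l)"
  unfolding cmap_def
proof (intro conjI allI impI)
  show "reparam l ` carrier (cyl X) \<subseteq> carrier (cyl X)"
    using l(2) by (auto simp: reparam_def)
  fix F z assume c: "conv (cyl X) F z"
  have pf: "pfilter (carrier X \<times> {0..1}) (filtermap (reparam l) F)"
    using c l(2) unfolding conv_cyl by (auto intro!: pfilter_filtermap simp: reparam_def)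
  have "filtermap l (filtermap snd F) \<le> nhds (l (snd z))"
    using c by (intro continuous_on_filtermap_le_nhds[OF l(1)]) (auto simp: conv_cyl conv_unit_interval)
  then show "conv (cyl X) (filtermap (reparam l) F) (reparam l z)"
    using c pf l(2) pfilter_filtermap[OF pf, of snd]
    unfolding conv_cyl conv_unit_interval by (auto simp: reparam_def filtermap_filtermap)
qed

lemma cmap_reparam2:
  assumes X: "convergence_space X"
    and \<rho>: "continuous_on ({0..1} \<times> {0..1}) \<rho>" "\<rho> ` ({0..1} \<times> {0..1}) \<subseteq> {0..1} \<times> {0..1}"
  shows "cmap (cyl (cyl X)) (cyl (cyl X)) (reparam2 \<rho>)"
  unfolding cmap_def
proof (intro conjI allI impI)
  show "reparam2 \<rho> ` carrier (cyl (cyl X)) \<subseteq> carrier (cyl (cyl X))"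
    using \<rho>(2) by (fastforce simp: reparam2_def)
  fix F z assume c: "conv (cyl (cyl X)) F z"
  let ?uv = "\<lambda>y. (snd (fst y), snd y)"
  have z: "fst (fst z) \<in> carrier X" "?uv z \<in> {0..1} \<times> {0..1}"
    using c unfolding conv_cyl by auto
  have pf: "pfilter ((carrier X \<times> {0..1}) \<times> {0..1}) F"
    using c unfolding conv_cyl by simp
  have "((\<lambda>y. snd (fst y)) \<longlongrightarrow> snd (fst z)) F" "(snd \<longlongrightarrow> snd z) F"
    using c unfolding conv_cyl conv_unit_interval filterlim_def by (simp_all add: filtermap_filtermap)
  then have "(?uv \<longlongrightarrow> ?uv z) F" by (rule tendsto_Pair)
  moreover have "eventually (\<lambda>y. ?uv y \<in> {0..1} \<times> {0..1}) F"
    using pfilter_eventually_mem[OF pf] by (auto elim: eventually_mono)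
  ultimately have "((\<lambda>y. \<rho> (?uv y)) \<longlongrightarrow> \<rho> (?uv z)) F"
    using continuous_on_tendsto_compose[OF \<rho>(1)] z(2) by blast
  then have lim1: "filtermap (\<lambda>y. fst (\<rho> (?uv y))) F \<le> nhds (fst (\<rho> (?uv z)))"
    and lim2: "filtermap (\<lambda>y. snd (\<rho> (?uv y))) F \<le> nhds (snd (\<rho> (?uv z)))"
    unfolding filterlim_def[symmetric] by (auto intro: tendsto_fst tendsto_snd)
  have pf': "pfilter ((carrier X \<times> {0..1}) \<times> {0..1}) (filtermap (reparam2 \<rho>) F)"
    using pf \<rho>(2) by (intro pfilter_filtermap) (fastforce simp: reparam2_def)+
  have "conv X (filtermap fst (filtermap fst (filtermap (reparam2 \<rho>) F))) (fst (fst (reparam2 \<rho> z)))"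
    using c unfolding conv_cyl by (simp add: filtermap_filtermap reparam2_def)
  moreover have pf1: "pfilter (carrier X \<times> {0..1}) (filtermap fst (filtermap (reparam2 \<rho>) F))"
    by (rule pfilter_filtermap[OF pf']) auto
  moreover have "pfilter {0..1} (filtermap snd (filtermap (reparam2 \<rho>) F))"
    by (rule pfilter_filtermap[OF pf']) auto
  moreover have "pfilter {0..1} (filtermap snd (filtermap fst (filtermap (reparam2 \<rho>) F)))"
    by (rule pfilter_filtermap[OF pf1]) auto
  moreover have "\<rho> (?uv z) \<in> {0..1} \<times> {0..1}"
    using \<rho>(2) z(2) by blast
  ultimately show "conv (cyl (cyl X)) (filtermap (reparam2 \<rho>) F) (reparam2 \<rho> z)"
    using pf' lim1 lim2 z
    unfolding conv_cyl conv_unit_interval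
    by (auto simp: filtermap_filtermap reparam2_def)
qed

lemma cmap_cyl_swap: "convergence_space X \<Longrightarrow> cmap (cyl (cyl X)) (cyl (cyl X)) (reparam2 prod.swap)"
  by (rule cmap_reparam2[OF _ continuous_on_swap]) auto

text \<open>The pasting lemma needs a pseudotopological target: an ultrafilter lives eventually on one of
the two closed pieces.\<close>
lemma cmap_cyl_if:
  assumes X: "convergence_space X" and Y: "pseudotop Y"
    and h1: "cmap (cyl X) Y h1" and h2: "cmap (cyl X) Y h2"
    and agree: "\<And>x. x \<in> carrier X \<Longrightarrow> h1 (x, c) = h2 (x, c)"
  shows "cmap (cyl X) Y (\<lambda>z. if snd z \<le> c then h1 z else h2 z)" (is "cmap _ _ ?h")
proof (rule cmap_ultraI[OF convergence_space_cyl[OF X] Y])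
  show "?h ` carrier (cyl X) \<subseteq> carrier Y"
    using cmap_carrier[OF h1] cmap_carrier[OF h2] by auto
  fix W z assume W: "ultra W" and c: "conv (cyl X) W z"
  have z: "fst z \<in> carrier X" and lim: "(snd \<longlongrightarrow> snd z) W"
    using c unfolding conv_cyl conv_unit_interval filterlim_def by auto
  from W consider "eventually (\<lambda>y. snd y \<le> c) W" | "eventually (\<lambda>y. \<not> snd y \<le> c) W"
    unfolding ultra_iff by blast
  then show "conv Y (filtermap ?h W) (?h z)"
  proof cases
    case 1
    then have "snd z \<le> c" using tendsto_upperbound[OF lim] ultra_not_bot[OF W] by blast
    moreover have "filtermap ?h W = filtermap h1 W"
      using 1 by (intro filtermap_cong_eventually) (auto elim: eventually_mono)
    ultimately show ?thesis using cmap_conv[OF h1 c] by simp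
  next
    case 2
    then have "eventually (\<lambda>y. c \<le> snd y) W" by (auto elim: eventually_mono)
    then have "c \<le> snd z" using tendsto_lowerbound[OF lim _ ultra_not_bot[OF W]] by blast
    then have "?h z = h2 z" using agree[OF z] by (cases z) auto
    moreover have "filtermap ?h W = filtermap h2 W"
      using 2 by (intro filtermap_cong_eventually) (auto elim: eventually_mono)
    ultimately show ?thesis using cmap_conv[OF h2 c] by simp
  qed
qed

lemma carrier_sum_space [simp]: "carrier (sum_space A X) = Inl ` carrier A \<union> Inr ` carrier X"
  unfolding sum_space_def by simp

lemma conv_sum_space:
  "conv (sum_space A X) F z \<longleftrightarrow> pfilter (Inl ` carrier A \<union> Inr ` carrier X) F \<and>
     ((\<exists>G a. conv A G a \<and> z = Inl a \<and> F \<le> filtermap Inl G) \<or>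
      (\<exists>G x. conv X G x \<and> z = Inr x \<and> F \<le> filtermap Inr G))"
  unfolding sum_space_def by simp

lemma convergence_space_sum:
  assumes A: "convergence_space A" and X: "convergence_space X"
  shows "convergence_space (sum_space A X)"
proof (rule convergence_spaceI)
  show "conv (sum_space A X) F' z"
    if "conv (sum_space A X) F z" "pfilter (carrier (sum_space A X)) F'" "F' \<le> F" for F F' z
    using that unfolding conv_sum_space carrier_sum_space by (blast intro: order_trans)
  fix z assume "z \<in> carrier (sum_space A X)"
  then show "conv (sum_space A X) (principal {z}) z"
    unfolding conv_sum_space using conv_principal[OF A] conv_principal[OF X]
    by (fastforce simp: pfilter_def principal_eq_bot_iff)
qed (use conv_in_carrier[OF A] conv_in_carrier[OF X] in \<open>auto simp: conv_sum_space\<close>)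

lemma cmap_Inl: "convergence_space A \<Longrightarrow> cmap A (sum_space A X) Inl"
  unfolding cmap_def conv_sum_space by (auto dest: conv_pfilter intro!: pfilter_filtermap)

lemma cmap_Inr: "convergence_space X \<Longrightarrow> cmap X (sum_space A X) Inr"
  unfolding cmap_def conv_sum_space by (auto dest: conv_pfilter intro!: pfilter_filtermap)

lemma cmap_case_sum:
  assumes Z: "convergence_space Z" and g: "cmap A Z g" and h: "cmap X Z h"
  shows "cmap (sum_space A X) Z (case_sum g h)"
  unfolding cmap_def
proof (intro conjI allI impI)
  show "case_sum g h ` carrier (sum_space A X) \<subseteq> carrier Z"
    using cmap_carrier[OF g] cmap_carrier[OF h] by auto
  fix F z assume c: "conv (sum_space A X) F z"
  have nb: "filtermap (case_sum g h) F \<noteq> bot"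
    using c unfolding conv_sum_space by (auto simp: filtermap_bot_iff dest: pfilter_not_bot)
  from c consider (l) G a where "conv A G a" "z = Inl a" "F \<le> filtermap Inl G"
    | (r) G x where "conv X G x" "z = Inr x" "F \<le> filtermap Inr G"
    unfolding conv_sum_space by blast
  then show "conv Z (filtermap (case_sum g h) F) (case_sum g h z)"
  proof cases
    case l
    then have "filtermap (case_sum g h) F \<le> filtermap g G"
      using filtermap_mono[OF l(3), of "case_sum g h"] by (simp add: filtermap_filtermap)
    then show ?thesis using conv_mono[OF Z cmap_conv[OF g l(1)] _ nb] l(2) by simp
  next
    case r
    then have "filtermap (case_sum g h) F \<le> filtermap h G"
      using filtermap_mono[OF r(3), of "case_sum g h"] by (simp add: filtermap_filtermap)
    then show ?thesis using conv_mono[OF Z cmap_conv[OF h r(1)] _ nb] r(2) by simp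
  qed
qed

section \<open>Cylinders of final structures and of sums\<close>

lemma filter_le_map_prod:
  assumes "filtermap fst F \<le> filtermap q G"
  shows "F \<le> filtermap (map_prod q id) (G \<times>\<^sub>F filtermap snd F)"
proof -
  have "F \<le> filtermap fst F \<times>\<^sub>F filtermap snd F" by (rule le_prod_filterI) auto
  also have "\<dots> \<le> filtermap q G \<times>\<^sub>F filtermap snd F" by (rule prod_filter_mono[OF assms order_refl])
  also have "\<dots> \<le> filtermap (map_prod q id) (G \<times>\<^sub>F filtermap snd F)"
    unfolding le_filter_def
  proof (intro allI impI)
    fix P assume "eventually P (filtermap (map_prod q id) (G \<times>\<^sub>F filtermap snd F))"
    then obtain Pf Pg where "eventually Pf G" "eventually Pg (filtermap snd F)"
      and P: "\<And>x y. Pf x \<Longrightarrow> Pg y \<Longrightarrow> P (q x, y)"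
      unfolding eventually_filtermap eventually_prod_filter by auto
    moreover have "eventually (\<lambda>z. \<exists>x. Pf x \<and> z = q x) (filtermap q G)"
      unfolding eventually_filtermap using \<open>eventually Pf G\<close> by (auto elim: eventually_mono)
    ultimately show "eventually P (filtermap q G \<times>\<^sub>F filtermap snd F)"
      unfolding eventually_prod_filter by blast
  qed
  finally show ?thesis .
qed

text \<open>The cylinder functor preserves final structures, as PsTop is cartesian closed: an ultrafilter
on the cylinder of a final structure lies below the image of a converging product filter.\<close>
lemma cmap_cyl_final_space:
  assumes S: "convergence_space S"
  shows "cmap (cyl (final_space S q)) (final_space (cyl S) (map_prod q id)) (\<lambda>z. z)"
  unfolding cmap_def filtermap_ident
proof (intro conjI allI impI)
  have carrier: "map_prod q id ` carrier (cyl S) = carrier (cyl (final_space S q))"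
    by (force simp: map_prod_def)
  then show "(\<lambda>z. z) ` carrier (cyl (final_space S q)) \<subseteq> carrier (final_space (cyl S) (map_prod q id))"
    by simp
  fix F z assume c: "conv (cyl (final_space S q)) F z"
  have "\<exists>G s. conv (cyl S) G s \<and> map_prod q id s = z \<and> U \<le> filtermap (map_prod q id) G"
    if U: "ultra U" "U \<le> F" for U
  proof -
    have "ultra (filtermap fst U)" "filtermap fst U \<le> filtermap fst F"
      using U by (simp_all add: ultra_filtermap filtermap_mono)
    moreover have "conv (final_space S q) (filtermap fst F) (fst z)"
      using c unfolding conv_cyl by simp
    ultimately have "\<exists>G s. conv S G s \<and> q s = fst z \<and> filtermap fst U \<le> filtermap q G"
      unfolding final_space_def by simp
    then obtain G s where G: "conv S G s" "q s = fst z" "filtermap fst U \<le> filtermap q G"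
      by blast
    have "conv unit_interval (filtermap snd F) (snd z)"
      using c unfolding conv_cyl by simp
    then have "conv unit_interval (filtermap snd U) (snd z)"
      by (rule conv_mono[OF convergence_space_unit_interval _ filtermap_mono[OF U(2)]])
        (simp add: filtermap_bot_iff ultra_not_bot[OF U(1)])
    then have "conv (cyl S) (G \<times>\<^sub>F filtermap snd U) (s, snd z)"
      by (rule conv_cyl_prod_filter[OF S G(1)])
    then show ?thesis
      using G(2) filter_le_map_prod[OF G(3)] by (intro exI[of _ "G \<times>\<^sub>F filtermap snd U"] exI[of _ "(s, snd z)"]) auto
  qed
  then show "conv (final_space (cyl S) (map_prod q id)) F z"
    using c unfolding final_space_def carrier conv_cyl by simp
qed

lemma cyl_final_space_univ:
  assumes S: "convergence_space S" and Z: "pseudotop Z" and g: "cmap (cyl S) Z g"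
    and fibres: "\<And>s s' t. s \<in> carrier S \<Longrightarrow> s' \<in> carrier S \<Longrightarrow> t \<in> {0..1} \<Longrightarrow> q s = q s' \<Longrightarrow>
      g (s, t) = g (s', t)"
  shows "\<exists>w. cmap (cyl (final_space S q)) Z w \<and> (\<forall>s\<in>carrier S. \<forall>t\<in>{0..1}. w (q s, t) = g (s, t))"
proof -
  have "g z = g z'" if "z \<in> carrier (cyl S)" "z' \<in> carrier (cyl S)" "map_prod q id z = map_prod q id z'"
    for z z'
  proof -
    obtain s t s' t' where z: "z = (s, t)" "z' = (s', t')" by fastforce
    show ?thesis using that fibres[of s s' t] unfolding z by simp
  qed
  then obtain w where w: "cmap (final_space (cyl S) (map_prod q id)) Z w"
    "\<forall>z\<in>carrier (cyl S). w (map_prod q id z) = g z"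
    using final_space_univ[OF convergence_space_cyl[OF S] Z g] by blast
  have "cmap (cyl (final_space S q)) Z w"
    using cmap_comp[OF cmap_cyl_final_space[OF S] w(1)] by simp
  moreover have "\<forall>s\<in>carrier S. \<forall>t\<in>{0..1}. w (q s, t) = g (s, t)"
    using w(2) by simp
  ultimately show ?thesis by blast
qed

lemma cmap_cyl_sum:
  assumes A: "convergence_space A" and X: "convergence_space X" and Z: "convergence_space Z"
    and g: "cmap (cyl A) Z g" and h: "cmap (cyl X) Z h"
  shows "cmap (cyl (sum_space A X)) Z (\<lambda>(s, t). case s of Inl a \<Rightarrow> g (a, t) | Inr x \<Rightarrow> h (x, t))"
    (is "cmap _ _ ?k")
  unfolding cmap_def
proof (intro conjI allI impI)
  show "?k ` carrier (cyl (sum_space A X)) \<subseteq> carrier Z"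
    using cmap_carrier[OF g] cmap_carrier[OF h] by auto
  fix F z assume c: "conv (cyl (sum_space A X)) F z"
  have nb: "filtermap ?k F \<noteq> bot"
    using c unfolding conv_cyl by (auto simp: filtermap_bot_iff dest: pfilter_not_bot)
  have c2: "conv unit_interval (filtermap snd F) (snd z)"
    using c unfolding conv_cyl by simp
  from c consider (l) G a where "conv A G a" "fst z = Inl a" "filtermap fst F \<le> filtermap Inl G"
    | (r) G x where "conv X G x" "fst z = Inr x" "filtermap fst F \<le> filtermap Inr G"
    unfolding conv_cyl conv_sum_space by blast
  then show "conv Z (filtermap ?k F) (?k z)"
  proof cases
    case l
    have "filtermap ?k F \<le> filtermap ?k (filtermap (map_prod Inl id) (G \<times>\<^sub>F filtermap snd F))"
      by (rule filtermap_mono[OF filter_le_map_prod[OF l(3)]])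
    also have "\<dots> = filtermap g (G \<times>\<^sub>F filtermap snd F)"
      by (simp add: filtermap_filtermap map_prod_def split_def)
    finally show ?thesis
      using conv_mono[OF Z cmap_conv[OF g conv_cyl_prod_filter[OF A l(1) c2]] _ nb] l(2)
      by (simp add: split_def)
  next
    case r
    have "filtermap ?k F \<le> filtermap ?k (filtermap (map_prod Inr id) (G \<times>\<^sub>F filtermap snd F))"
      by (rule filtermap_mono[OF filter_le_map_prod[OF r(3)]])
    also have "\<dots> = filtermap h (G \<times>\<^sub>F filtermap snd F)"
      by (simp add: filtermap_filtermap map_prod_def split_def)
    finally show ?thesis
      using conv_mono[OF Z cmap_conv[OF h conv_cyl_prod_filter[OF X r(1) c2]] _ nb] r(2)
      by (simp add: split_def)
  qed
qed

lemma glue_eq_final_space: "glue S E = final_space S (gcls S E)"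
proof -
  have "carrier S // glue_rel S E = (\<lambda>s. glue_rel S E `` {s}) ` carrier S"
    unfolding quotient_def by auto
  then show ?thesis
    unfolding glue_def quotient_space_def final_space_def gcls_def by simp
qed

lemma carrier_glue: "carrier (glue S E) = gcls S E ` carrier S"
  unfolding glue_eq_final_space by simp

lemma gcls_eq: "(x, y) \<in> E \<Longrightarrow> gcls S E x = gcls S E y"
proof -
  assume "(x, y) \<in> E"
  then have "(x, y) \<in> glue_rel S E" "(y, x) \<in> glue_rel S E"
    unfolding glue_rel_def by auto
  then show ?thesis
    unfolding gcls_def glue_rel_def by (auto intro: rtrancl_trans)
qed

lemma glue_rel_invariant:
  assumes "(x, y) \<in> glue_rel S E" and "\<And>u v. (u, v) \<in> E \<Longrightarrow> P u = P v"
  shows "P x = P y"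
  using assms(1) unfolding glue_rel_def
  by (induction rule: rtrancl_induct) (auto dest: assms(2))

lemma gcls_eq_invariant:
  assumes "gcls S E x = gcls S E y" and "\<And>u v. (u, v) \<in> E \<Longrightarrow> P u = P v"
  shows "P x = P y"
proof (rule glue_rel_invariant[OF _ assms(2)])
  have "y \<in> gcls S E y" unfolding gcls_def glue_rel_def by simp
  then show "(x, y) \<in> glue_rel S E" using assms(1) unfolding gcls_def by blast
qed

lemma pseudotop_glue: "convergence_space S \<Longrightarrow> pseudotop (glue S E)"
  unfolding glue_eq_final_space by (rule pseudotop_final_space)

lemma cmap_gcls: "convergence_space S \<Longrightarrow> cmap S (glue S E) (gcls S E)"
  unfolding glue_eq_final_space by (rule cmap_final_space)

lemma glue_univ:
  assumes S: "convergence_space S" and Z: "pseudotop Z" and g: "cmap S Z g"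
    and inv: "\<And>u v. (u, v) \<in> E \<Longrightarrow> g u = g v"
  shows "\<exists>w. cmap (glue S E) Z w \<and> (\<forall>s\<in>carrier S. w (gcls S E s) = g s)"
  unfolding glue_eq_final_space
  by (rule final_space_univ[OF S Z g]) (erule gcls_eq_invariant[OF _ inv])

lemma cyl_glue_univ:
  assumes S: "convergence_space S" and Z: "pseudotop Z" and g: "cmap (cyl S) Z g"
    and inv: "\<And>u v t. (u, v) \<in> E \<Longrightarrow> t \<in> {0..1} \<Longrightarrow> g (u, t) = g (v, t)"
  shows "\<exists>w. cmap (cyl (glue S E)) Z w \<and> (\<forall>s\<in>carrier S. \<forall>t\<in>{0..1}. w (gcls S E s, t) = g (s, t))"
  unfolding glue_eq_final_space
  by (rule cyl_final_space_univ[OF S Z g])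
    (erule gcls_eq_invariant[where P = "\<lambda>s. g (s, t)" for t], erule inv)

section \<open>The homotopy extension property\<close>

lemma hepI:
  assumes "\<And>k (Y :: 'y cspace) f G. k \<in> {0, 1} \<Longrightarrow> pseudotop Y \<Longrightarrow> cmap A Y f \<Longrightarrow> cmap (cyl B) Y G \<Longrightarrow>
      (\<And>b. b \<in> carrier B \<Longrightarrow> f (i b) = G (b, k)) \<Longrightarrow>
      \<exists>H. cmap (cyl A) Y H \<and> (\<forall>a\<in>carrier A. H (a, k) = f a) \<and>
        (\<forall>b\<in>carrier B. \<forall>t\<in>{0..1}. H (i b, t) = G (b, t))"
  shows "hep TYPE('y) B A i"
  unfolding hep_def
proof (intro ballI allI impI)
  fix k and Y :: "'y cspace" and f G
  assume "k \<in> {0, 1}" "pseudotop Y \<and> cmap A Y f \<and> cmap (cyl B) Y G \<and> (\<forall>b\<in>carrier B. f (i b) = G (incl k b))"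
  then obtain H where "cmap (cyl A) Y H" "\<forall>a\<in>carrier A. H (a, k) = f a"
    "\<forall>b\<in>carrier B. \<forall>t\<in>{0..1}. H (i b, t) = G (b, t)"
    using assms[of k Y f G] unfolding incl_def by blast
  then show "\<exists>H. cmap (cyl A) Y H \<and> (\<forall>a\<in>carrier A. H (incl k a) = f a) \<and>
      (\<forall>z\<in>carrier (cyl B). H (Imap i z) = G z)"
    by (auto simp: incl_def Imap_def)
qed

lemma hepE:
  assumes "hep TYPE('y) B A i" "k \<in> {0, 1}" "pseudotop (Y :: 'y cspace)" "cmap A Y f" "cmap (cyl B) Y G"
    "\<And>b. b \<in> carrier B \<Longrightarrow> f (i b) = G (b, k)"
  obtains H where "cmap (cyl A) Y H" "\<And>a. a \<in> carrier A \<Longrightarrow> H (a, k) = f a"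
    "\<And>b t. b \<in> carrier B \<Longrightarrow> t \<in> {0..1} \<Longrightarrow> H (i b, t) = G (b, t)"
proof -
  obtain H where H: "cmap (cyl A) Y H" "\<forall>a\<in>carrier A. H (incl k a) = f a"
    "\<forall>z\<in>carrier (cyl B). H (Imap i z) = G z"
    using assms unfolding hep_def incl_def by blast
  show thesis
    by (rule that[OF H(1)]) (use H(2,3) in \<open>auto simp: incl_def Imap_def\<close>)
qed

lemma cofD:
  assumes "cof B A (i :: 'b \<Rightarrow> 'a)"
  shows "pseudotop B" "pseudotop A" "cmap B A i" "hep TYPE('a + 'b \<times> real) B A i"
  using assms unfolding cof_def by simp_all

text \<open>The mapping cylinder \<open>A \<union>\<^sub>B IB\<close>, glued along the end \<open>k\<close>, is the final structure on
\<open>A + IB\<close> for \<open>mcyl_quot i k\<close>, which keeps the identified points inside \<open>A + IB\<close>.  Hence it is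
one of the test spaces in the definition of \<open>cof\<close>.\<close>
definition mcyl_quot :: "('b \<Rightarrow> 'a) \<Rightarrow> real \<Rightarrow> 'a + 'b \<times> real \<Rightarrow> 'a + 'b \<times> real" where
  "mcyl_quot i k s = (case s of Inl a \<Rightarrow> Inl a | Inr (b, t) \<Rightarrow> if t = k then Inl (i b) else Inr (b, t))"

lemma mcyl_quot_simps [simp]:
  "mcyl_quot i k (Inl a) = Inl a"
  "mcyl_quot i k (Inr (b, t)) = (if t = k then Inl (i b) else Inr (b, t))"
  unfolding mcyl_quot_def by simp_all

lemma mcyl_quot_fibres:
  assumes "s \<in> carrier (sum_space A (cyl B))" "s' \<in> carrier (sum_space A (cyl B))"
    and "mcyl_quot i k s = mcyl_quot i k s'"
    and P: "\<And>b. b \<in> carrier B \<Longrightarrow> P (Inl (i b)) = P (Inr (b, k))"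
  shows "P s = P s'"
proof -
  have "P (mcyl_quot i k s) = P s" if "s \<in> carrier (sum_space A (cyl B))" for s
    using that P by auto
  then show ?thesis using assms(1-3) by metis
qed

lemma mcyl_retraction:
  assumes c: "cof B A i" and k: "k \<in> {0, 1}"
  obtains R where "cmap (cyl A) (final_space (sum_space A (cyl B)) (mcyl_quot i k)) R"
    "\<And>a. a \<in> carrier A \<Longrightarrow> R (a, k) = Inl a"
    "\<And>b t. b \<in> carrier B \<Longrightarrow> t \<in> {0..1} \<Longrightarrow> R (i b, t) = mcyl_quot i k (Inr (b, t))"
proof -
  let ?S = "sum_space A (cyl B)"
  have A: "convergence_space A" and B: "convergence_space (cyl B)"
    using cofD(1,2)[OF c] by (simp_all add: pseudotop_convergence_space convergence_space_cyl)
  have S: "convergence_space ?S" by (rule convergence_space_sum[OF A B])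
  have q: "cmap ?S (final_space ?S (mcyl_quot i k)) (mcyl_quot i k)"
    by (rule cmap_final_space[OF S])
  obtain R where "cmap (cyl A) (final_space ?S (mcyl_quot i k)) R"
    "\<And>a. a \<in> carrier A \<Longrightarrow> R (a, k) = mcyl_quot i k (Inl a)"
    "\<And>b t. b \<in> carrier B \<Longrightarrow> t \<in> {0..1} \<Longrightarrow> R (i b, t) = mcyl_quot i k (Inr (b, t))"
    by (rule hepE[OF cofD(4)[OF c] k pseudotop_final_space[OF S]
          cmap_comp[OF cmap_Inl[OF A] q] cmap_comp[OF cmap_Inr[OF B] q]]) auto
  then show thesis using that by simp
qed

text \<open>Glue \<open>f\<close> and \<open>G\<close> on the mapping cylinder and compose with the retraction.\<close>
lemma cof_hep:
  assumes c: "cof B A i"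
  shows "hep TYPE('y) B A i"
proof (rule hepI)
  fix k and Y :: "'y cspace" and f G
  assume k: "k \<in> {0, 1}" and Y: "pseudotop Y" and f: "cmap A Y f" and G: "cmap (cyl B) Y G"
    and compat: "\<And>b. b \<in> carrier B \<Longrightarrow> f (i b) = G (b, k)"
  let ?S = "sum_space A (cyl B)"
  have S: "convergence_space ?S"
    using cofD(1,2)[OF c]
    by (simp add: convergence_space_sum convergence_space_cyl pseudotop_convergence_space)
  obtain R where R: "cmap (cyl A) (final_space ?S (mcyl_quot i k)) R"
    "\<And>a. a \<in> carrier A \<Longrightarrow> R (a, k) = Inl a"
    "\<And>b t. b \<in> carrier B \<Longrightarrow> t \<in> {0..1} \<Longrightarrow> R (i b, t) = mcyl_quot i k (Inr (b, t))"
    using mcyl_retraction[OF c k] by blast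
  have "case_sum f G s = case_sum f G s'"
    if "s \<in> carrier ?S" "s' \<in> carrier ?S" "mcyl_quot i k s = mcyl_quot i k s'" for s s'
    using that by (rule mcyl_quot_fibres) (simp add: compat)
  then obtain w where w: "cmap (final_space ?S (mcyl_quot i k)) Y w"
    "\<forall>s\<in>carrier ?S. w (mcyl_quot i k s) = case_sum f G s"
    using final_space_univ[OF S Y cmap_case_sum[OF pseudotop_convergence_space[OF Y] f G]] by blast
  show "\<exists>H. cmap (cyl A) Y H \<and> (\<forall>a\<in>carrier A. H (a, k) = f a) \<and>
      (\<forall>b\<in>carrier B. \<forall>t\<in>{0..1}. H (i b, t) = G (b, t))"
  proof (intro exI[of _ "\<lambda>z. w (R z)"] conjI ballI)
    show "cmap (cyl A) Y (\<lambda>z. w (R z))" by (rule cmap_comp[OF R(1) w(1)])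
    show "w (R (a, k)) = f a" if "a \<in> carrier A" for a
    proof -
      have "Inl a \<in> carrier ?S" using that by simp
      from bspec[OF w(2) this] show ?thesis using R(2)[OF that] by simp
    qed
    show "w (R (i b, t)) = G (b, t)" if "b \<in> carrier B" "t \<in> {0..1}" for b t
    proof -
      have "Inr (b, t) \<in> carrier ?S" using that by simp
      from bspec[OF w(2) this] show ?thesis using R(3)[OF that] by simp
    qed
  qed
qed

text \<open>The same retraction, now carrying the first interval coordinate along:
the extension is \<open>((a, u), v) \<mapsto> W (R (a, v), u)\<close>.\<close>
lemma cof_hep_cyl:
  assumes c: "cof B A i"
  shows "hep TYPE('y) (cyl B) (cyl A) (Imap i)"
proof (rule hepI)
  fix k and Y :: "'y cspace" and F G
  assume k: "k \<in> {0, 1}" and Y: "pseudotop Y" and F: "cmap (cyl A) Y F" and G: "cmap (cyl (cyl B)) Y G"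
    and compat: "\<And>z. z \<in> carrier (cyl B) \<Longrightarrow> F (Imap i z) = G (z, k)"
  let ?S = "sum_space A (cyl B)"
  have A: "convergence_space A" and B: "convergence_space B"
    using cofD(1,2)[OF c] by (simp_all add: pseudotop_convergence_space)
  have S: "convergence_space ?S" by (simp add: convergence_space_sum convergence_space_cyl A B)
  obtain R where R: "cmap (cyl A) (final_space ?S (mcyl_quot i k)) R"
    "\<And>a. a \<in> carrier A \<Longrightarrow> R (a, k) = Inl a"
    "\<And>b t. b \<in> carrier B \<Longrightarrow> t \<in> {0..1} \<Longrightarrow> R (i b, t) = mcyl_quot i k (Inr (b, t))"
    using mcyl_retraction[OF c k] by blast
  let ?g = "\<lambda>(s, t). case s of Inl a \<Rightarrow> F (a, t) | Inr y \<Rightarrow> G (reparam2 prod.swap (y, t))"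
  have g: "cmap (cyl ?S) Y ?g"
    by (rule cmap_cyl_sum[OF A convergence_space_cyl[OF B] pseudotop_convergence_space[OF Y] F
          cmap_comp[OF cmap_cyl_swap[OF B] G]])
  have "?g (s, t) = ?g (s', t)" if "s \<in> carrier ?S" "s' \<in> carrier ?S" "t \<in> {0..1}"
    "mcyl_quot i k s = mcyl_quot i k s'" for s s' t
    using that(1,2,4) by (rule mcyl_quot_fibres) (use compat[of "(b, t)" for b] that(3) in \<open>simp add: Imap_def\<close>)
  then obtain W where W: "cmap (cyl (final_space ?S (mcyl_quot i k))) Y W"
    "\<forall>s\<in>carrier ?S. \<forall>t\<in>{0..1}. W (mcyl_quot i k s, t) = ?g (s, t)"
    using cyl_final_space_univ[OF S Y g] by blast
  show "\<exists>H. cmap (cyl (cyl A)) Y H \<and> (\<forall>z\<in>carrier (cyl A). H (z, k) = F z) \<and>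
      (\<forall>z\<in>carrier (cyl B). \<forall>t\<in>{0..1}. H (Imap i z, t) = G (z, t))"
  proof (intro exI[of _ "\<lambda>z. W (Imap R (reparam2 prod.swap z))"] conjI ballI)
    show "cmap (cyl (cyl A)) Y (\<lambda>z. W (Imap R (reparam2 prod.swap z)))"
      using cmap_comp[OF cmap_comp[OF cmap_cyl_swap[OF A] cmap_Imap[OF R(1)]] W(1)] .
  next
    fix z assume "z \<in> carrier (cyl A)"
    then obtain a t where z: "z = (a, t)" "a \<in> carrier A" "t \<in> {0..1}" by auto
    then have "Inl a \<in> carrier ?S" by simp
    from bspec[OF bspec[OF W(2) this] z(3)] show "W (Imap R (reparam2 prod.swap (z, k))) = F z"
      using R(2)[OF z(2)] z(1) by (simp add: Imap_def)
  next
    fix z and t :: real assume "z \<in> carrier (cyl B)" and t: "t \<in> {0..1}"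
    then obtain b u where z: "z = (b, u)" "b \<in> carrier B" "u \<in> {0..1}" by auto
    then have "Inr (b, t) \<in> carrier ?S" using t by simp
    from bspec[OF bspec[OF W(2) this] z(3)] show "W (Imap R (reparam2 prod.swap (Imap i z, t))) = G (z, t)"
      using R(3)[OF z(2) t] z(1) by (simp add: Imap_def)
  qed
qed

section \<open>The cofibration axioms\<close>

lemma ps_iso_hep:
  assumes "ps_iso B A i"
  shows "hep TYPE('y) B A i"
proof (rule hepI)
  obtain g where g: "cmap A B g" "\<forall>x\<in>carrier B. g (i x) = x" "\<forall>y\<in>carrier A. i (g y) = y"
    using assms unfolding ps_iso_def by blast
  fix k and Y :: "'y cspace" and f G
  assume G: "cmap (cyl B) Y G" and compat: "\<And>b. b \<in> carrier B \<Longrightarrow> f (i b) = G (b, k)"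
  show "\<exists>H. cmap (cyl A) Y H \<and> (\<forall>a\<in>carrier A. H (a, k) = f a) \<and>
      (\<forall>b\<in>carrier B. \<forall>t\<in>{0..1}. H (i b, t) = G (b, t))"
  proof (intro exI[of _ "\<lambda>z. G (Imap g z)"] conjI ballI)
    show "cmap (cyl A) Y (\<lambda>z. G (Imap g z))" by (rule cmap_comp[OF cmap_Imap[OF g(1)] G])
    show "G (Imap g (a, k)) = f a" if "a \<in> carrier A" for a
      using compat[OF cmap_carrier[OF g(1) that]] g(3) that by (simp add: Imap_def)
    show "G (Imap g (i b, t)) = G (b, t)" if "b \<in> carrier B" for b t
      using g(2) that by (simp add: Imap_def)
  qed
qed

lemma carrier_empty_space [simp]: "carrier empty_space = {}"
  unfolding empty_space_def by simp

lemma pseudotop_empty_space: "pseudotop empty_space"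
  unfolding pseudotop_def convergence_space_def pfilter_def empty_space_def by simp

lemma cmap_empty_space: "cmap empty_space X f"
  unfolding cmap_def empty_space_def by simp

lemma cyl_empty_space: "cyl empty_space = empty_space"
  unfolding cyl_def empty_space_def by (simp add: pfilter_def)

lemma empty_space_hep: "hep TYPE('y) empty_space X i"
proof (rule hepI)
  fix k and Y :: "'y cspace" and f G assume "cmap X Y f"
  then show "\<exists>H. cmap (cyl X) Y H \<and> (\<forall>a\<in>carrier X. H (a, k) = f a) \<and>
      (\<forall>b\<in>carrier empty_space. \<forall>t\<in>{0..1}. H (i b, t) = G (b, t))"
    by (intro exI[of _ "\<lambda>z. f (proj z)"] conjI cmap_comp[OF cmap_proj]) (auto simp: proj_def)
qed

lemma hep_comp:
  assumes hep1: "hep TYPE('y) C B i" and hep2: "hep TYPE('y) B A i'"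
    and i: "cmap C B i" and i': "cmap B A i'"
  shows "hep TYPE('y) C A (\<lambda>c. i' (i c))"
proof (rule hepI)
  fix k and Y :: "'y cspace" and f G
  assume k: "k \<in> {0, 1}" and Y: "pseudotop Y" and f: "cmap A Y f" and G: "cmap (cyl C) Y G"
    and compat: "\<And>c. c \<in> carrier C \<Longrightarrow> f (i' (i c)) = G (c, k)"
  obtain H1 where H1: "cmap (cyl B) Y H1" "\<And>b. b \<in> carrier B \<Longrightarrow> H1 (b, k) = f (i' b)"
    "\<And>c t. c \<in> carrier C \<Longrightarrow> t \<in> {0..1} \<Longrightarrow> H1 (i c, t) = G (c, t)"
    using hepE[OF hep1 k Y cmap_comp[OF i' f] G compat] by blast
  obtain H2 where H2: "cmap (cyl A) Y H2" "\<And>a. a \<in> carrier A \<Longrightarrow> H2 (a, k) = f a"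
    "\<And>b t. b \<in> carrier B \<Longrightarrow> t \<in> {0..1} \<Longrightarrow> H2 (i' b, t) = H1 (b, t)"
    using hepE[OF hep2 k Y f H1(1) H1(2)[symmetric]] by blast
  show "\<exists>H. cmap (cyl A) Y H \<and> (\<forall>a\<in>carrier A. H (a, k) = f a) \<and>
      (\<forall>c\<in>carrier C. \<forall>t\<in>{0..1}. H (i' (i c), t) = G (c, t))"
    using H2 H1(3) cmap_carrier[OF i] by (intro exI[of _ H2]) simp
qed

lemma ps_iso_cof: "pseudotop B \<Longrightarrow> pseudotop A \<Longrightarrow> ps_iso B A i \<Longrightarrow> cof B A i"
  unfolding cof_def by (simp add: ps_iso_hep) (simp add: ps_iso_def)

lemma empty_space_cof: "pseudotop X \<Longrightarrow> cof empty_space X f"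
  unfolding cof_def by (simp add: pseudotop_empty_space cmap_empty_space empty_space_hep)

lemma cof_comp:
  assumes "cof C B i" "cof B A i'"
  shows "cof C A (i' \<circ> i)"
  using cofD[OF assms(1)] cofD[OF assms(2)] unfolding cof_def comp_def
  by (simp add: cmap_comp hep_comp[OF cof_hep[OF assms(1)] cof_hep[OF assms(2)]])

section \<open>Pushouts\<close>

lemma is_pushoutI:
  assumes P: "pseudotop P" and u: "cmap A P u" and v: "cmap X P v"
    and commutes: "\<forall>b\<in>carrier B. u (i b) = v (f b)"
    and cover: "carrier P \<subseteq> u ` carrier A \<union> v ` carrier X"
    and ext: "\<And>(Z :: 'z cspace) g h. pseudotop Z \<Longrightarrow> cmap A Z g \<Longrightarrow> cmap X Z h \<Longrightarrow>
      \<forall>b\<in>carrier B. g (i b) = h (f b) \<Longrightarrow>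
      \<exists>w. cmap P Z w \<and> (\<forall>a\<in>carrier A. w (u a) = g a) \<and> (\<forall>x\<in>carrier X. w (v x) = h x)"
  shows "is_pushout TYPE('z) B A X P i f u v"
  unfolding is_pushout_def
proof (intro conjI P u v commutes allI impI ballI)
  fix Z :: "'z cspace" and g h
  assume "pseudotop Z \<and> cmap A Z g \<and> cmap X Z h \<and> (\<forall>b\<in>carrier B. g (i b) = h (f b))"
  then show "\<exists>w. cmap P Z w \<and> (\<forall>a\<in>carrier A. w (u a) = g a) \<and> (\<forall>x\<in>carrier X. w (v x) = h x)"
    using ext[of Z g h] by blast
next
  fix Z :: "'z cspace" and g h w w' p
  assume w: "cmap P Z w \<and> (\<forall>a\<in>carrier A. w (u a) = g a) \<and> (\<forall>x\<in>carrier X. w (v x) = h x) \<and>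
      cmap P Z w' \<and> (\<forall>a\<in>carrier A. w' (u a) = g a) \<and> (\<forall>x\<in>carrier X. w' (v x) = h x)"
    and p: "p \<in> carrier P"
  from cover p consider a where "a \<in> carrier A" "p = u a" | x where "x \<in> carrier X" "p = v x"
    by blast
  then show "w p = w' p" using w by cases simp_all
qed

lemma carrier_pushout_space:
  "carrier (pushout_space B A X i f) = po_inl B A X i f ` carrier A \<union> po_inr B A X i f ` carrier X"
  unfolding pushout_space_def carrier_glue po_inl_def po_inr_def by auto

lemma po_inl_po_inr: "b \<in> carrier B \<Longrightarrow> po_inl B A X i f (i b) = po_inr B A X i f (f b)"
  unfolding po_inl_def po_inr_def by (rule gcls_eq) (auto simp: po_rel_def)

context
  fixes A :: "'a cspace" and X :: "'x cspace"
  assumes A: "convergence_space A" and X: "convergence_space X"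
begin

lemma pseudotop_pushout_space: "pseudotop (pushout_space B A X i f)"
  unfolding pushout_space_def by (rule pseudotop_glue[OF convergence_space_sum[OF A X]])

lemma cmap_po_inl: "cmap A (pushout_space B A X i f) (po_inl B A X i f)"
  unfolding pushout_space_def po_inl_def
  by (rule cmap_comp[OF cmap_Inl[OF A] cmap_gcls[OF convergence_space_sum[OF A X]]])

lemma cmap_po_inr: "cmap X (pushout_space B A X i f) (po_inr B A X i f)"
  unfolding pushout_space_def po_inr_def
  by (rule cmap_comp[OF cmap_Inr[OF X] cmap_gcls[OF convergence_space_sum[OF A X]]])

lemma pushout_space_univ:
  assumes Z: "pseudotop Z" and g: "cmap A Z g" and h: "cmap X Z h"
    and compat: "\<And>b. b \<in> carrier B \<Longrightarrow> g (i b) = h (f b)"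
  shows "\<exists>w. cmap (pushout_space B A X i f) Z w \<and>
    (\<forall>a\<in>carrier A. w (po_inl B A X i f a) = g a) \<and> (\<forall>x\<in>carrier X. w (po_inr B A X i f x) = h x)"
proof -
  have "case_sum g h u = case_sum g h v" if "(u, v) \<in> po_rel B i f" for u v
    using that compat unfolding po_rel_def by auto
  then obtain w where w: "cmap (glue (sum_space A X) (po_rel B i f)) Z w"
    "\<forall>s\<in>carrier (sum_space A X). w (gcls (sum_space A X) (po_rel B i f) s) = case_sum g h s"
    using glue_univ[OF convergence_space_sum[OF A X] Z cmap_case_sum[OF pseudotop_convergence_space[OF Z] g h]]
    by blast
  then show ?thesis
    unfolding pushout_space_def po_inl_def po_inr_def by auto
qed

lemma cyl_pushout_space_univ:
  assumes Z: "pseudotop Z" and g: "cmap (cyl A) Z g" and h: "cmap (cyl X) Z h"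
    and compat: "\<And>b t. b \<in> carrier B \<Longrightarrow> t \<in> {0..1} \<Longrightarrow> g (i b, t) = h (f b, t)"
  shows "\<exists>w. cmap (cyl (pushout_space B A X i f)) Z w \<and>
    (\<forall>a\<in>carrier A. \<forall>t\<in>{0..1}. w (po_inl B A X i f a, t) = g (a, t)) \<and>
    (\<forall>x\<in>carrier X. \<forall>t\<in>{0..1}. w (po_inr B A X i f x, t) = h (x, t))"
proof -
  let ?k = "\<lambda>(s, t). case s of Inl a \<Rightarrow> g (a, t) | Inr x \<Rightarrow> h (x, t)"
  have "?k (u, t) = ?k (v, t)" if "(u, v) \<in> po_rel B i f" "t \<in> {0..1}" for u v t
    using that compat unfolding po_rel_def by auto
  then obtain w where w: "cmap (cyl (glue (sum_space A X) (po_rel B i f))) Z w"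
    "\<forall>s\<in>carrier (sum_space A X). \<forall>t\<in>{0..1}. w (gcls (sum_space A X) (po_rel B i f) s, t) = ?k (s, t)"
    using cyl_glue_univ[OF convergence_space_sum[OF A X] Z
        cmap_cyl_sum[OF A X pseudotop_convergence_space[OF Z] g h]]
    by blast
  then show ?thesis
    unfolding pushout_space_def po_inl_def po_inr_def by auto
qed

lemma pushout_space_is_pushout:
  "is_pushout TYPE('z) B A X (pushout_space B A X i f) i f (po_inl B A X i f) (po_inr B A X i f)"
proof (rule is_pushoutI[OF pseudotop_pushout_space cmap_po_inl cmap_po_inr])
  show "\<forall>b\<in>carrier B. po_inl B A X i f (i b) = po_inr B A X i f (f b)"
    by (simp add: po_inl_po_inr)
  show "carrier (pushout_space B A X i f) \<subseteq> po_inl B A X i f ` carrier A \<union> po_inr B A X i f ` carrier X"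
    by (simp add: carrier_pushout_space)
  fix Z :: "'z cspace" and g h
  assume Z: "pseudotop Z" and g: "cmap A Z g" and h: "cmap X Z h"
    and compat: "\<forall>b\<in>carrier B. g (i b) = h (f b)"
  show "\<exists>w. cmap (pushout_space B A X i f) Z w \<and> (\<forall>a\<in>carrier A. w (po_inl B A X i f a) = g a) \<and>
      (\<forall>x\<in>carrier X. w (po_inr B A X i f x) = h x)"
    using compat by (intro pushout_space_univ[OF Z g h]) blast
qed

lemma cyl_pushout_space_is_pushout:
  "is_pushout TYPE('z) (cyl B) (cyl A) (cyl X) (cyl (pushout_space B A X i f))
     (Imap i) (Imap f) (Imap (po_inl B A X i f)) (Imap (po_inr B A X i f))"
proof (rule is_pushoutI[OF pseudotop_cyl[OF pseudotop_pushout_space]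
      cmap_Imap[OF cmap_po_inl] cmap_Imap[OF cmap_po_inr]])
  show "\<forall>z\<in>carrier (cyl B). Imap (po_inl B A X i f) (Imap i z) = Imap (po_inr B A X i f) (Imap f z)"
    by (auto simp: Imap_def po_inl_po_inr)
  show "carrier (cyl (pushout_space B A X i f)) \<subseteq>
      Imap (po_inl B A X i f) ` carrier (cyl A) \<union> Imap (po_inr B A X i f) ` carrier (cyl X)"
    by (force simp: carrier_pushout_space Imap_def)
  fix Z :: "'z cspace" and g h
  assume Z: "pseudotop Z" and g: "cmap (cyl A) Z g" and h: "cmap (cyl X) Z h"
    and compat: "\<forall>z\<in>carrier (cyl B). g (Imap i z) = h (Imap f z)"
  obtain w where "cmap (cyl (pushout_space B A X i f)) Z w"
    "\<forall>a\<in>carrier A. \<forall>t\<in>{0..1}. w (po_inl B A X i f a, t) = g (a, t)"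
    "\<forall>x\<in>carrier X. \<forall>t\<in>{0..1}. w (po_inr B A X i f x, t) = h (x, t)"
  proof -
    have "g (i b, t) = h (f b, t)" if "b \<in> carrier B" "t \<in> {0..1}" for b t
      using bspec[OF compat, of "(b, t)"] that by (simp add: Imap_def)
    then show ?thesis using that cyl_pushout_space_univ[OF Z g h] by blast
  qed
  then show "\<exists>w. cmap (cyl (pushout_space B A X i f)) Z w \<and>
      (\<forall>z\<in>carrier (cyl A). w (Imap (po_inl B A X i f) z) = g z) \<and>
      (\<forall>z\<in>carrier (cyl X). w (Imap (po_inr B A X i f) z) = h z)"
    by (auto simp: Imap_def)
qed

text \<open>A homotopy on \<open>X\<close> is transported along \<open>f\<close> and extended over \<open>A\<close> by the HEP of \<open>i\<close>;
both are then glued on the cylinder of the pushout.\<close>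
lemma hep_po_inr:
  assumes hep: "hep TYPE('y) B A i" and f: "cmap B X f"
  shows "hep TYPE('y) X (pushout_space B A X i f) (po_inr B A X i f)"
proof (rule hepI)
  let ?P = "pushout_space B A X i f" and ?inl = "po_inl B A X i f" and ?inr = "po_inr B A X i f"
  fix k and Y :: "'y cspace" and f' G
  assume k: "k \<in> {0, 1}" and Y: "pseudotop Y" and f': "cmap ?P Y f'" and G: "cmap (cyl X) Y G"
    and compat: "\<And>x. x \<in> carrier X \<Longrightarrow> f' (?inr x) = G (x, k)"
  have "f' (?inl (i b)) = G (Imap f (b, k))" if "b \<in> carrier B" for b
    using compat[OF cmap_carrier[OF f that]] po_inl_po_inr[where A = A and X = X and i = i and f = f, OF that]
    by (simp add: Imap_def)
  then obtain H where H: "cmap (cyl A) Y H" "\<And>a. a \<in> carrier A \<Longrightarrow> H (a, k) = f' (?inl a)"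
    "\<And>b t. b \<in> carrier B \<Longrightarrow> t \<in> {0..1} \<Longrightarrow> H (i b, t) = G (Imap f (b, t))"
    using hepE[OF hep k Y cmap_comp[OF cmap_po_inl f'] cmap_comp[OF cmap_Imap[OF f] G]] by blast
  obtain w where w: "cmap (cyl ?P) Y w" "\<forall>a\<in>carrier A. \<forall>t\<in>{0..1}. w (?inl a, t) = H (a, t)"
    "\<forall>x\<in>carrier X. \<forall>t\<in>{0..1}. w (?inr x, t) = G (x, t)"
  proof -
    have "H (i b, t) = G (f b, t)" if "b \<in> carrier B" "t \<in> {0..1}" for b t
      using H(3)[OF that] by (simp add: Imap_def)
    then show ?thesis using that cyl_pushout_space_univ[OF Y H(1) G] by blast
  qed
  have "w (p, k) = f' p" if "p \<in> carrier ?P" for p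
    using that k w(2,3) H(2) compat unfolding carrier_pushout_space by auto
  then show "\<exists>H. cmap (cyl ?P) Y H \<and> (\<forall>p\<in>carrier ?P. H (p, k) = f' p) \<and>
      (\<forall>x\<in>carrier X. \<forall>t\<in>{0..1}. H (?inr x, t) = G (x, t))"
    using w(1,3) by blast
qed

end

lemma cof_pushout:
  assumes c: "cof B A i" and X: "pseudotop X" and f: "cmap B X f"
  shows "is_pushout TYPE('z) B A X (pushout_space B A X i f) i f (po_inl B A X i f) (po_inr B A X i f)"
    and "cof X (pushout_space B A X i f) (po_inr B A X i f)"
    and "is_pushout TYPE('z) (cyl B) (cyl A) (cyl X) (cyl (pushout_space B A X i f))
      (Imap i) (Imap f) (Imap (po_inl B A X i f)) (Imap (po_inr B A X i f))"
proof -
  have A': "convergence_space A" and X': "convergence_space X"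
    using cofD(2)[OF c] X by (simp_all add: pseudotop_convergence_space)
  show "is_pushout TYPE('z) B A X (pushout_space B A X i f) i f (po_inl B A X i f) (po_inr B A X i f)"
    by (rule pushout_space_is_pushout[OF A' X'])
  show "is_pushout TYPE('z) (cyl B) (cyl A) (cyl X) (cyl (pushout_space B A X i f))
      (Imap i) (Imap f) (Imap (po_inl B A X i f)) (Imap (po_inr B A X i f))"
    by (rule cyl_pushout_space_is_pushout[OF A' X'])
  show "cof X (pushout_space B A X i f) (po_inr B A X i f)"
    unfolding cof_def
    using X pseudotop_pushout_space[OF A' X'] cmap_po_inr[OF A' X'] hep_po_inr[OF A' X' cof_hep[OF c] f]
    by blast
qed

section \<open>The relative cylinder axiom\<close>

text \<open>A piecewise linear self-homeomorphism of the square, with inverse \<open>square_unfold\<close>; it maps the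
sides \<open>s = 0\<close>, \<open>t = 0\<close>, \<open>s = 1\<close> onto the three thirds of the bottom side.\<close>
definition square_fold :: "real \<times> real \<Rightarrow> real \<times> real" where
  "square_fold p =
     (max (max (1 - snd p) (1 + fst p - 3 * snd p / 2)) (6 * fst p + snd p - 4) / 3,
      min (min (snd p) (2 * fst p)) (2 - 2 * fst p))"

definition square_unfold :: "real \<times> real \<Rightarrow> real \<times> real" where
  "square_unfold p =
     (let r = max 0 (min (3 * fst p) (3 * (1 - snd p)))
      in (snd p / 2 + min (max (r - (1 - snd p)) 0) (1 - snd p),
          max (1 - r) (snd p + max 0 (r - 2 * (1 - snd p)))))"

lemma continuous_on_square_fold: "continuous_on S square_fold"
  unfolding square_fold_def by (intro continuous_intros) auto

lemma continuous_on_square_unfold: "continuous_on S square_unfold"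
  unfolding square_unfold_def Let_def by (intro continuous_intros) auto

lemma square_fold_in_square:
  "s \<in> {0..1} \<Longrightarrow> t \<in> {0..1} \<Longrightarrow> square_fold (s, t) \<in> {0..1} \<times> {0..1}"
  unfolding square_fold_def by (simp add: min_def max_def)

lemma square_unfold_in_square:
  "u \<in> {0..1} \<Longrightarrow> v \<in> {0..1} \<Longrightarrow> square_unfold (u, v) \<in> {0..1} \<times> {0..1}"
  unfolding square_unfold_def Let_def by (simp add: min_def max_def)

lemma square_unfold_fold:
  "s \<in> {0..1} \<Longrightarrow> t \<in> {0..1} \<Longrightarrow> square_unfold (square_fold (s, t)) = (s, t)"
  unfolding square_fold_def square_unfold_def Let_def
  by (simp add: min_def max_def; simp add: field_simps)

lemma square_fold_boundary:
  "t \<in> {0..1} \<Longrightarrow> square_fold (0, t) = ((1 - t) / 3, 0)"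
  "s \<in> {0..1} \<Longrightarrow> square_fold (s, 0) = ((1 + s) / 3, 0)"
  "t \<in> {0..1} \<Longrightarrow> square_fold (1, t) = ((2 + t) / 3, 0)"
  unfolding square_fold_def by (simp_all add: min_def max_def)

lemma square_unfold_bottom:
  "0 \<le> u \<Longrightarrow> u \<le> 1/3 \<Longrightarrow> square_unfold (u, 0) = (0, 1 - 3 * u)"
  "1/3 \<le> u \<Longrightarrow> u \<le> 2/3 \<Longrightarrow> square_unfold (u, 0) = (3 * u - 1, 0)"
  "2/3 \<le> u \<Longrightarrow> u \<le> 1 \<Longrightarrow> square_unfold (u, 0) = (1, 3 * u - 2)"
  unfolding square_unfold_def Let_def by (simp_all add: min_def max_def)

definition flip_end :: "real \<Rightarrow> real \<Rightarrow> real" where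
  "flip_end k t = k + (1 - 2 * k) * t"

lemma flip_end_simps:
  assumes "k \<in> {0, 1}"
  shows "flip_end k 0 = k" "flip_end k k = 0" "flip_end k (flip_end k t) = t"
  using assms unfolding flip_end_def by (auto simp: algebra_simps)

lemma flip_end_in_interval: "k \<in> {0, 1} \<Longrightarrow> t \<in> {0..1} \<Longrightarrow> flip_end k t \<in> {0..1}"
  unfolding flip_end_def by auto

lemma continuous_on_flip_end: "continuous_on S (flip_end k)"
  unfolding flip_end_def by (intro continuous_intros)

lemma cmap_reparam_flip_end:
  "convergence_space X \<Longrightarrow> k \<in> {0, 1} \<Longrightarrow> cmap (cyl X) (cyl X) (reparam (flip_end k))"
  by (rule cmap_reparam[OF _ continuous_on_flip_end]) (auto simp: flip_end_def)

lemma cmap_cyl_join3: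
  assumes X: "convergence_space X" and Y: "pseudotop Y"
    and l: "cmap (cyl X) Y l" and m: "cmap (cyl X) Y m" and r: "cmap (cyl X) Y r"
    and lm: "\<And>x. x \<in> carrier X \<Longrightarrow> l (x, 0) = m (x, 0)"
    and mr: "\<And>x. x \<in> carrier X \<Longrightarrow> m (x, 1) = r (x, 0)"
  shows "cmap (cyl X) Y (\<lambda>(x, u). if u \<le> 1/3 then l (x, 1 - 3 * u)
      else if u \<le> 2/3 then m (x, 3 * u - 1) else r (x, 3 * u - 2))"
proof -
  have stretch: "cmap (cyl X) Y (\<lambda>z. h (reparam (\<lambda>u. min 1 (max 0 (a * u + b))) z))"
    if "cmap (cyl X) Y h" for h and a b :: real
  proof (rule cmap_comp[OF cmap_reparam[OF X] that])
    show "continuous_on {0..1} (\<lambda>u. min 1 (max 0 (a * u + b)))"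
      by (intro continuous_intros)
  qed auto
  let ?h1 = "\<lambda>z. l (reparam (\<lambda>u. min 1 (max 0 (-3 * u + 1))) z)"
  let ?h2 = "\<lambda>z. m (reparam (\<lambda>u. min 1 (max 0 (3 * u + -1))) z)"
  let ?h3 = "\<lambda>z. r (reparam (\<lambda>u. min 1 (max 0 (3 * u + -2))) z)"
  have "cmap (cyl X) Y (\<lambda>z. if snd z \<le> 2/3 then ?h2 z else ?h3 z)"
    by (rule cmap_cyl_if[OF X Y stretch[OF m] stretch[OF r]]) (simp add: mr)
  then have "cmap (cyl X) Y (\<lambda>z. if snd z \<le> 1/3 then ?h1 z else if snd z \<le> 2/3 then ?h2 z else ?h3 z)"
    by (rule cmap_cyl_if[OF X Y stretch[OF l]]) (simp add: lm)
  then show ?thesis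
  proof (rule cmap_cong[OF _ convergence_space_cyl[OF X]])
    fix z assume "z \<in> carrier (cyl X)"
    then obtain x u where z: "z = (x, u)" "0 \<le> u" "u \<le> 1" by auto
    consider "u \<le> 1/3" | "1/3 < u" "u < 2/3" | "u = 2/3" | "2/3 < u" by linarith
    then show "(if snd z \<le> 1/3 then ?h1 z else if snd z \<le> 2/3 then ?h2 z else ?h3 z) =
        (\<lambda>(x, u). if u \<le> 1/3 then l (x, 1 - 3 * u)
          else if u \<le> 2/3 then m (x, 3 * u - 1) else r (x, 3 * u - 2)) z"
      using z by cases (simp_all add: min_def max_def)
  qed
qed

text \<open>Data on the bottom and the two vertical sides of \<open>A \<times> I \<times> I\<close> and on \<open>B \<times> I \<times> I\<close> extend over
\<open>A \<times> I \<times> I\<close>: \<open>square_fold\<close> moves the three sides to the bottom, where the HEP of \<open>Ii\<close> applies.\<close>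
lemma cof_extend_over_square:
  assumes c: "cof B A i" and Y: "pseudotop Y"
    and l: "cmap (cyl A) Y l" and m: "cmap (cyl A) Y m" and r: "cmap (cyl A) Y r"
    and g: "cmap (cyl (cyl B)) Y g"
    and lm: "\<And>a. a \<in> carrier A \<Longrightarrow> l (a, 0) = m (a, 0)"
    and mr: "\<And>a. a \<in> carrier A \<Longrightarrow> m (a, 1) = r (a, 0)"
    and gm: "\<And>b s. b \<in> carrier B \<Longrightarrow> s \<in> {0..1} \<Longrightarrow> g ((b, s), 0) = m (i b, s)"
    and gl: "\<And>b t. b \<in> carrier B \<Longrightarrow> t \<in> {0..1} \<Longrightarrow> g ((b, 0), t) = l (i b, t)"
    and gr: "\<And>b t. b \<in> carrier B \<Longrightarrow> t \<in> {0..1} \<Longrightarrow> g ((b, 1), t) = r (i b, t)"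
  obtains H where "cmap (cyl (cyl A)) Y H"
    "\<And>a s. a \<in> carrier A \<Longrightarrow> s \<in> {0..1} \<Longrightarrow> H ((a, s), 0) = m (a, s)"
    "\<And>a t. a \<in> carrier A \<Longrightarrow> t \<in> {0..1} \<Longrightarrow> H ((a, 0), t) = l (a, t)"
    "\<And>a t. a \<in> carrier A \<Longrightarrow> t \<in> {0..1} \<Longrightarrow> H ((a, 1), t) = r (a, t)"
    "\<And>b s t. b \<in> carrier B \<Longrightarrow> s \<in> {0..1} \<Longrightarrow> t \<in> {0..1} \<Longrightarrow> H ((i b, s), t) = g ((b, s), t)"
proof -
  have A: "convergence_space A" and B: "convergence_space B"
    using cofD(1,2)[OF c] by (simp_all add: pseudotop_convergence_space)
  define F0 where "F0 = (\<lambda>(a, u). if u \<le> 1/3 then l (a, 1 - 3 * u)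
    else if u \<le> 2/3 then m (a, 3 * u - 1) else r (a, 3 * u - 2))"
  have F0: "cmap (cyl A) Y F0"
    unfolding F0_def by (rule cmap_cyl_join3[OF A Y l m r lm mr])
  define G0 where "G0 z = g (reparam2 square_unfold z)" for z
  have G0: "cmap (cyl (cyl B)) Y G0"
    unfolding G0_def
    by (rule cmap_comp[OF cmap_reparam2[OF B] g])
      (auto simp: image_subset_iff intro!: continuous_on_square_unfold square_unfold_in_square)
  have "F0 (Imap i z) = G0 (z, 0)" if zB: "z \<in> carrier (cyl B)" for z
  proof -
    obtain b u where z: "z = (b, u)" "b \<in> carrier B" "u \<in> {0..1}"
      using zB by auto
    consider "u \<le> 1/3" | "1/3 < u" "u \<le> 2/3" | "2/3 < u" by linarith
    then show ?thesis
      using z unfolding F0_def G0_def by cases (simp_all add: Imap_def square_unfold_bottom gl gm gr)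
  qed
  then obtain K where K: "cmap (cyl (cyl A)) Y K" "\<And>z. z \<in> carrier (cyl A) \<Longrightarrow> K (z, 0) = F0 z"
    "\<And>z t. z \<in> carrier (cyl B) \<Longrightarrow> t \<in> {0..1} \<Longrightarrow> K (Imap i z, t) = G0 (z, t)"
    using hepE[OF cof_hep_cyl[OF c] _ Y F0 G0] by blast
  show thesis
  proof (rule that)
    show "cmap (cyl (cyl A)) Y (\<lambda>z. K (reparam2 square_fold z))"
      by (rule cmap_comp[OF cmap_reparam2[OF A] K(1)])
        (auto simp: image_subset_iff intro!: continuous_on_square_fold square_fold_in_square)
    fix a assume a: "a \<in> carrier A"
    show "K (reparam2 square_fold ((a, s), 0)) = m (a, s)" if "s \<in> {0..1}" for s
      using that K(2)[of "(a, (1 + s) / 3)"] a lm[OF a]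
      by (cases "s = 0") (simp_all add: square_fold_boundary F0_def field_simps)
    show "K (reparam2 square_fold ((a, 0), t)) = l (a, t)" if "t \<in> {0..1}" for t
      using that K(2)[of "(a, (1 - t) / 3)"] a by (simp add: square_fold_boundary F0_def field_simps)
    show "K (reparam2 square_fold ((a, 1), t)) = r (a, t)" if "t \<in> {0..1}" for t
      using that K(2)[of "(a, (2 + t) / 3)"] a mr[OF a]
      by (cases "t = 0") (simp_all add: square_fold_boundary F0_def field_simps)
  next
    fix b and s t :: real assume b: "b \<in> carrier B" and st: "s \<in> {0..1}" "t \<in> {0..1}"
    then have "(b, fst (square_fold (s, t))) \<in> carrier (cyl B)" "snd (square_fold (s, t)) \<in> {0..1}"
      using square_fold_in_square[OF st] by auto
    from K(3)[OF this] show "K (reparam2 square_fold ((i b, s), t)) = g ((b, s), t)"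
      using square_unfold_fold[OF st] by (simp add: Imap_def G0_def)
  qed
qed

abbreviation dcyl_class :: "'b cspace \<Rightarrow> 'a cspace \<Rightarrow> ('b \<Rightarrow> 'a) \<Rightarrow> 'a + 'b \<times> real + 'a \<Rightarrow> ('a + 'b \<times> real + 'a) set" where
  "dcyl_class B A i \<equiv> gcls (sum_space A (sum_space (cyl B) A)) (dcyl_rel B i)"

lemma dcyl_raw_respects: "(u, v) \<in> dcyl_rel B i \<Longrightarrow> dcyl_raw i u = dcyl_raw i v"
  unfolding dcyl_rel_def by (auto simp: dcyl_raw_def incl_def Imap_def)

lemma dcyl_map_gcls: "dcyl_map i (dcyl_class B A i s) = dcyl_raw i s"
proof -
  let ?c = "dcyl_class B A i s"
  have "s \<in> ?c" unfolding gcls_def glue_rel_def by simp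
  then have "(SOME s'. s' \<in> ?c) \<in> ?c" by (rule someI)
  then have "(s, SOME s'. s' \<in> ?c) \<in> glue_rel (sum_space A (sum_space (cyl B) A)) (dcyl_rel B i)"
    unfolding gcls_def by simp
  then have "dcyl_raw i s = dcyl_raw i (SOME s'. s' \<in> ?c)"
    by (rule glue_rel_invariant) (rule dcyl_raw_respects)
  then show ?thesis unfolding dcyl_map_def by simp
qed

lemma carrier_dcyl: "carrier (dcyl B A i) = dcyl_class B A i ` carrier (sum_space A (sum_space (cyl B) A))"
  unfolding dcyl_def carrier_glue ..

lemma pseudotop_dcyl: "convergence_space A \<Longrightarrow> convergence_space B \<Longrightarrow> pseudotop (dcyl B A i)"
  unfolding dcyl_def by (intro pseudotop_glue convergence_space_sum convergence_space_cyl)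

lemma cmap_dcyl_map:
  assumes A: "pseudotop A" and B: "convergence_space B" and i: "cmap B A i"
  shows "cmap (dcyl B A i) (cyl A) (dcyl_map i)"
proof -
  let ?S = "sum_space A (sum_space (cyl B) A)" and ?E = "dcyl_rel B i"
  have A': "convergence_space A" by (rule pseudotop_convergence_space[OF A])
  have S: "convergence_space ?S"
    by (intro convergence_space_sum convergence_space_cyl A' B)
  have IA: "convergence_space (cyl A)" by (rule convergence_space_cyl[OF A'])
  have "dcyl_raw i = case_sum (incl 0) (case_sum (Imap i) (incl 1))"
    by (rule ext) (simp add: dcyl_raw_def split: sum.split)
  then have "cmap ?S (cyl A) (dcyl_raw i)"
    using cmap_case_sum[OF IA cmap_incl[OF A'] cmap_case_sum[OF IA cmap_Imap[OF i] cmap_incl[OF A']]]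
    by simp
  then obtain w where w: "cmap (glue ?S ?E) (cyl A) w" "\<forall>s\<in>carrier ?S. w (gcls ?S ?E s) = dcyl_raw i s"
    using glue_univ[OF S pseudotop_cyl[OF A]] dcyl_raw_respects by blast
  show ?thesis
  proof (rule cmap_cong)
    show "cmap (dcyl B A i) (cyl A) w" using w(1) unfolding dcyl_def .
    show "convergence_space (dcyl B A i)"
      by (rule pseudotop_convergence_space[OF pseudotop_dcyl[OF A' B]])
    fix x assume "x \<in> carrier (dcyl B A i)"
    then show "w x = dcyl_map i x"
      unfolding carrier_dcyl using w(2) by (auto simp: dcyl_map_gcls)
  qed
qed

lemma dcyl_ends:
  assumes "b \<in> carrier B"
  shows "dcyl_class B A i (Inl (i b)) = dcyl_class B A i (Inr (Inl (b, 0)))"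
    "dcyl_class B A i (Inr (Inr (i b))) = dcyl_class B A i (Inr (Inl (b, 1)))"
  by (rule gcls_eq, force simp: dcyl_rel_def assms)+

lemma cmap_dcyl_sides:
  assumes A: "convergence_space A" and B: "convergence_space B" and k: "k \<in> {0, 1}"
    and G: "cmap (cyl (dcyl B A i)) Y G"
  shows "cmap (cyl A) Y (\<lambda>z. G (Imap (\<lambda>a. dcyl_class B A i (Inl a)) (reparam (flip_end k) z)))"
    and "cmap (cyl A) Y (\<lambda>z. G (Imap (\<lambda>a. dcyl_class B A i (Inr (Inr a))) (reparam (flip_end k) z)))"
    and "cmap (cyl (cyl B)) Y (\<lambda>z. G (Imap (\<lambda>y. dcyl_class B A i (Inr (Inl y))) (reparam (flip_end k) z)))"
proof -
  have IB: "convergence_space (cyl B)" by (rule convergence_space_cyl[OF B])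
  have M: "convergence_space (sum_space (cyl B) A)" by (rule convergence_space_sum[OF IB A])
  have cl: "cmap (sum_space A (sum_space (cyl B) A)) (dcyl B A i) (dcyl_class B A i)"
    unfolding dcyl_def by (rule cmap_gcls[OF convergence_space_sum[OF A M]])
  have side: "cmap (cyl X) Y (\<lambda>z. G (Imap e (reparam (flip_end k) z)))"
    if "convergence_space X" "cmap X (dcyl B A i) e" for X :: "'x cspace" and e
    by (rule cmap_comp[OF cmap_reparam_flip_end[OF that(1) k] cmap_comp[OF cmap_Imap[OF that(2)] G]])
  show "cmap (cyl A) Y (\<lambda>z. G (Imap (\<lambda>a. dcyl_class B A i (Inl a)) (reparam (flip_end k) z)))"
    by (rule side[OF A cmap_comp[OF cmap_Inl[OF A] cl]])
  show "cmap (cyl A) Y (\<lambda>z. G (Imap (\<lambda>a. dcyl_class B A i (Inr (Inr a))) (reparam (flip_end k) z)))"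
    by (rule side[OF A cmap_comp[OF cmap_comp[OF cmap_Inr[OF A] cmap_Inr[OF M]] cl]])
  show "cmap (cyl (cyl B)) Y (\<lambda>z. G (Imap (\<lambda>y. dcyl_class B A i (Inr (Inl y))) (reparam (flip_end k) z)))"
    by (rule side[OF IB cmap_comp[OF cmap_comp[OF cmap_Inl[OF IB] cmap_Inr[OF M]] cl]])
qed

lemma dcyl_hep:
  assumes c: "cof B A i"
  shows "hep TYPE('y) (dcyl B A i) (cyl A) (dcyl_map i)"
proof (rule hepI)
  let ?S = "sum_space A (sum_space (cyl B) A)" and ?D = "dcyl B A i"
  let ?cl = "dcyl_class B A i"
  fix k and Y :: "'y cspace" and f G
  assume k: "k \<in> {0, 1}" and Y: "pseudotop Y" and f: "cmap (cyl A) Y f" and G: "cmap (cyl ?D) Y G"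
    and compat: "\<And>d. d \<in> carrier ?D \<Longrightarrow> f (dcyl_map i d) = G (d, k)"
  have A: "convergence_space A" and B: "convergence_space B"
    using cofD(1,2)[OF c] by (simp_all add: pseudotop_convergence_space)
  have compat': "f (dcyl_raw i s) = G (?cl s, k)" if "s \<in> carrier ?S" for s
    using compat[of "?cl s"] that unfolding carrier_dcyl dcyl_map_gcls by blast
  define l where "l z = G (Imap (\<lambda>a. ?cl (Inl a)) (reparam (flip_end k) z))" for z
  define r where "r z = G (Imap (\<lambda>a. ?cl (Inr (Inr a))) (reparam (flip_end k) z))" for z
  define g where "g z = G (Imap (\<lambda>y. ?cl (Inr (Inl y))) (reparam (flip_end k) z))" for z
  have l: "cmap (cyl A) Y l" and r: "cmap (cyl A) Y r" and g: "cmap (cyl (cyl B)) Y g"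
    unfolding l_def r_def g_def by (rule cmap_dcyl_sides[OF A B k G])+
  obtain H where H: "cmap (cyl (cyl A)) Y H"
    "\<And>a s. a \<in> carrier A \<Longrightarrow> s \<in> {0..1} \<Longrightarrow> H ((a, s), 0) = f (a, s)"
    "\<And>a t. a \<in> carrier A \<Longrightarrow> t \<in> {0..1} \<Longrightarrow> H ((a, 0), t) = l (a, t)"
    "\<And>a t. a \<in> carrier A \<Longrightarrow> t \<in> {0..1} \<Longrightarrow> H ((a, 1), t) = r (a, t)"
    "\<And>b s t. b \<in> carrier B \<Longrightarrow> s \<in> {0..1} \<Longrightarrow> t \<in> {0..1} \<Longrightarrow> H ((i b, s), t) = g ((b, s), t)"
  proof (rule cof_extend_over_square[OF c Y l f r g])
    show "l (a, 0) = f (a, 0)" "f (a, 1) = r (a, 0)" if "a \<in> carrier A" for a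
      using that compat'[of "Inl a"] compat'[of "Inr (Inr a)"] k
      by (simp_all add: l_def r_def Imap_def flip_end_simps dcyl_raw_def incl_def)
    show "g ((b, s), 0) = f (i b, s)" if "b \<in> carrier B" "s \<in> {0..1}" for b s
      using that compat'[of "Inr (Inl (b, s))"] k
      by (simp add: g_def Imap_def flip_end_simps dcyl_raw_def)
    show "g ((b, 0), t) = l (i b, t)" "g ((b, 1), t) = r (i b, t)" if "b \<in> carrier B" for b t
      using dcyl_ends[where A = A and i = i, OF that] by (simp_all add: g_def l_def r_def Imap_def)
  qed (rule that; assumption)
  show "\<exists>H'. cmap (cyl (cyl A)) Y H' \<and> (\<forall>z\<in>carrier (cyl A). H' (z, k) = f z) \<and>
      (\<forall>d\<in>carrier ?D. \<forall>t\<in>{0..1}. H' (dcyl_map i d, t) = G (d, t))"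
  proof (intro exI[of _ "\<lambda>z. H (reparam (flip_end k) z)"] conjI ballI)
    show "cmap (cyl (cyl A)) Y (\<lambda>z. H (reparam (flip_end k) z))"
      by (rule cmap_comp[OF cmap_reparam_flip_end[OF convergence_space_cyl[OF A] k] H(1)])
    show "H (reparam (flip_end k) (z, k)) = f z" if "z \<in> carrier (cyl A)" for z
      using that H(2) k by (auto simp: flip_end_simps)
    fix d and t :: real assume d: "d \<in> carrier ?D" and t: "t \<in> {0..1}"
    then obtain s where s: "s \<in> carrier ?S" "d = ?cl s" unfolding carrier_dcyl by blast
    have t': "flip_end k t \<in> {0..1}" by (rule flip_end_in_interval[OF k t])
    from s(1) consider a where "a \<in> carrier A" "s = Inl a" | a where "a \<in> carrier A" "s = Inr (Inr a)"
      | b u where "b \<in> carrier B" "u \<in> {0..1}" "s = Inr (Inl (b, u))"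
      by auto
    then show "H (reparam (flip_end k) (dcyl_map i d, t)) = G (d, t)"
      using s(2) H(3,4,5) t' k
      by cases (simp_all add: dcyl_map_gcls dcyl_raw_def incl_def Imap_def l_def r_def g_def flip_end_simps)
  qed
qed

lemma dcyl_cof:
  assumes c: "cof B A i"
  shows "cof (dcyl B A i) (cyl A) (dcyl_map i)"
  using cofD[OF c] dcyl_hep[OF c] unfolding cof_def
  by (simp add: pseudotop_convergence_space pseudotop_dcyl pseudotop_cyl cmap_dcyl_map)

theorem mainTheorem2:
  shows
  \<comment> \<open>the empty space is an initial object of PsTop\<close>
  "(pseudotop (empty_space :: 'b cspace) \<and>
    (\<forall>X :: 'a cspace. pseudotop X \<longrightarrow>
       (\<exists>f. cmap (empty_space :: 'b cspace) X f) \<and>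
       (\<forall>f g. cmap (empty_space :: 'b cspace) X f \<and> cmap (empty_space :: 'b cspace) X g \<longrightarrow>
          (\<forall>z\<in>carrier (empty_space :: 'b cspace). f z = g z)))) \<and>
   \<comment> \<open>(I, i_0, i_1, p) is a cylinder on PsTop\<close>
   (\<forall>X :: 'a cspace. pseudotop X \<longrightarrow>
      pseudotop (cyl X) \<and> (\<forall>k\<in>{0, 1::real}. cmap X (cyl X) (incl k)) \<and>
      cmap (cyl X) X proj \<and> (\<forall>k\<in>{0, 1::real}. \<forall>x\<in>carrier X. proj (incl k x) = x)) \<and>
   (\<forall>(X :: 'a cspace) (Y :: 'b cspace) f. pseudotop X \<and> pseudotop Y \<and> cmap X Y f \<longrightarrow>
      cmap (cyl X) (cyl Y) (Imap f) \<and>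
      (\<forall>k\<in>{0, 1::real}. \<forall>x\<in>carrier X. Imap f (incl k x) = incl k (f x)) \<and>
      (\<forall>z\<in>carrier (cyl X). proj (Imap f z) = f (proj z))) \<and>
   \<comment> \<open>(1) cylinder axiom\<close>
   cyl (empty_space :: 'a cspace) = empty_space \<and>
   \<comment> \<open>(2) pushout axiom\<close>
   (\<forall>(B :: 'b cspace) (A :: 'a cspace) (X :: 'x cspace) i f.
      cof B A i \<and> pseudotop X \<and> cmap B X f \<longrightarrow>
      is_pushout TYPE('z) B A X (pushout_space B A X i f) i f
        (po_inl B A X i f) (po_inr B A X i f) \<and>
      cof X (pushout_space B A X i f) (po_inr B A X i f) \<and>
      is_pushout TYPE('z) (cyl B) (cyl A) (cyl X) (cyl (pushout_space B A X i f))
        (Imap i) (Imap f) (Imap (po_inl B A X i f)) (Imap (po_inr B A X i f))) \<and>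
   \<comment> \<open>(3) cofibration axiom\<close>
   (\<forall>(B :: 'b cspace) (A :: 'a cspace) i.
      pseudotop B \<and> pseudotop A \<and> ps_iso B A i \<longrightarrow> cof B A i) \<and>
   (\<forall>(X :: 'a cspace) f. pseudotop X \<longrightarrow> cof (empty_space :: 'b cspace) X f) \<and>
   (\<forall>(C :: 'c cspace) (B :: 'b cspace) (A :: 'a cspace) i i'.
      cof C B i \<and> cof B A i' \<longrightarrow> cof C A (i' \<circ> i)) \<and>
   (\<forall>(B :: 'b cspace) (A :: 'a cspace) i. cof B A i \<longrightarrow> hep TYPE('y) B A i) \<and>
   \<comment> \<open>(4) interchange axiom\<close>
   (\<forall>X :: 'a cspace. pseudotop X \<longrightarrow>
      (\<exists>T. cmap (cyl (cyl X)) (cyl (cyl X)) T \<and>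
         (\<forall>k\<in>{0, 1::real}. \<forall>z\<in>carrier (cyl X).
            T (incl k z) = Imap (incl k) z \<and> T (Imap (incl k) z) = incl k z))) \<and>
   \<comment> \<open>(5) relative cylinder axiom\<close>
   (\<forall>(B :: 'b cspace) (A :: 'a cspace) i.
      cof B A i \<longrightarrow> cof (dcyl B A i) (cyl A) (dcyl_map i))"
  apply (intro conjI)
  subgoal by (rule pseudotop_empty_space)
  subgoal by (simp add: cmap_empty_space)
  subgoal by (auto simp: pseudotop_cyl cmap_proj proj_def incl_def intro!: cmap_incl pseudotop_convergence_space)
  subgoal by (simp add: cmap_Imap Imap_def incl_def proj_def)
  subgoal by (rule cyl_empty_space)
  subgoal by (simp add: cof_pushout)
  subgoal by (simp add: ps_iso_cof)
  subgoal by (simp add: empty_space_cof)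
  subgoal by (blast intro: cof_comp)
  subgoal by (simp add: cof_hep)
  subgoal
    by (intro allI impI exI[of _ "reparam2 prod.swap"] conjI cmap_cyl_swap pseudotop_convergence_space)
      (auto simp: incl_def Imap_def)
  subgoal by (simp add: dcyl_cof)
  done

end
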